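(* Let $A\in\mathbb{R}^{m\times n}$ be semi-monotone, let $A=P_1-R_1+S_1$ be a double proper weak regular splitting and $A=P_2-R_2+S_2$ a double proper regular splitting of $A$. Suppose $N(R_2)\supseteq N(P_2)$, $R(R_2)\subseteq R(P_2)$, $-1\notin\sigma(R_2P_1^{\dagger})$ and $\widehat{\mathcal{A}}^{\dagger}\geq 0$, where $\widehat{\mathcal{A}}=(I+R_2P_1^{\dagger})A$. If $P_1^{\dagger}R_1\geq P_2^{\dagger}R_2$, $P_2^{\dagger}S_2\geq P_1^{\dagger}S_1$ and $P_2^{\dagger}R_2+P_2^{\dagger}S_2\leq 0$, then $\rho(\mathcal{W}_{12})\leq\rho(T_1)<1$, where $$\mathcal{W}_{12}=\begin{pmatrix} P_2^{\dagger}R_2P_1^{\dagger}R_1-P_2^{\dagger}S_2 & -P_2^{\dagger}R_2P_1^{\dagger}S_1\\ I & 0\end{pmatrix},\qquad T_1=\begin{pmatrix} P_1^{\dagger}R_1 & -P_1^{\dagger}S_1\\ I&0\end{pmatrix}.$$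
   Context: For $M\in\mathbb{R}^{m\times n}$, $M^{\dagger}$ is its Moore–Penrose inverse, $R(M)$, $N(M)$ its range and null space; inequalities are entrywise; $\rho$ is the spectral radius, $\sigma$ the spectrum. $A$ is semi-monotone if $A^{\dagger}\geq0$. A double splitting $A=P-R+S$ is a double proper splitting if $R(P)=R(A)$ and $N(P)=N(A)$; it is double proper regular if moreover $P^{\dagger}\geq0$, $R\geq0$, $S\leq0$; double proper weak regular if moreover $P^{\dagger}\geq 0$, $P^{\dagger}R\geq 0$, $P^{\dagger}S\leq 0$. *)

theory Defs
  imports "Jordan_Normal_Form.Spectral_Radius" "Jordan_Normal_Form.Matrix_Kernel"
begin

definition is_penrose_inverse :: "real mat \<Rightarrow> real mat \<Rightarrow> bool" where
  "is_penrose_inverse A X \<longleftrightarrow>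
     X \<in> carrier_mat (dim_col A) (dim_row A) \<and>
     A * X * A = A \<and> X * A * X = X \<and>
     transpose_mat (A * X) = A * X \<and> transpose_mat (X * A) = X * A"

definition pinv :: "real mat \<Rightarrow> real mat" where
  "pinv A = (THE X. is_penrose_inverse A X)"

definition mat_range :: "real mat \<Rightarrow> real vec set" where
  "mat_range M = {M *\<^sub>v x | x. x \<in> carrier_vec (dim_col M)}"

definition mat_null :: "real mat \<Rightarrow> real vec set" where
  "mat_null M = mat_kernel M"

definition semi_monotone :: "real mat \<Rightarrow> bool" where
  "semi_monotone A \<longleftrightarrow> pinv A \<ge> 0\<^sub>m (dim_col A) (dim_row A)"

definition double_splitting :: "nat \<Rightarrow> nat \<Rightarrow> real mat \<Rightarrow> real mat \<Rightarrow> real mat \<Rightarrow> real mat \<Rightarrow> bool" where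
  "double_splitting m n A P R S \<longleftrightarrow>
     A \<in> carrier_mat m n \<and> P \<in> carrier_mat m n \<and> R \<in> carrier_mat m n \<and>
     S \<in> carrier_mat m n \<and> A = P - R + S"

definition double_proper_splitting :: "nat \<Rightarrow> nat \<Rightarrow> real mat \<Rightarrow> real mat \<Rightarrow> real mat \<Rightarrow> real mat \<Rightarrow> bool" where
  "double_proper_splitting m n A P R S \<longleftrightarrow>
     double_splitting m n A P R S \<and> mat_range P = mat_range A \<and> mat_null P = mat_null A"

definition double_proper_regular_splitting :: "nat \<Rightarrow> nat \<Rightarrow> real mat \<Rightarrow> real mat \<Rightarrow> real mat \<Rightarrow> real mat \<Rightarrow> bool" where
  "double_proper_regular_splitting m n A P R S \<longleftrightarrow>
     double_proper_splitting m n A P R S \<and> pinv P \<ge> 0\<^sub>m n m \<and>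
     R \<ge> 0\<^sub>m m n \<and> S \<le> 0\<^sub>m m n"

definition double_proper_weak_regular_splitting :: "nat \<Rightarrow> nat \<Rightarrow> real mat \<Rightarrow> real mat \<Rightarrow> real mat \<Rightarrow> real mat \<Rightarrow> bool" where
  "double_proper_weak_regular_splitting m n A P R S \<longleftrightarrow>
     double_proper_splitting m n A P R S \<and> pinv P \<ge> 0\<^sub>m n m \<and>
     pinv P * R \<ge> 0\<^sub>m n n \<and> pinv P * S \<le> 0\<^sub>m n n"

definition rspectrum :: "real mat \<Rightarrow> complex set" where
  "rspectrum M = spectrum (map_mat complex_of_real M)"

definition rho :: "real mat \<Rightarrow> real" where
  "rho M = spectral_radius (map_mat complex_of_real M)"

end

theory Submission
  imports Defs
begin

text \<open>
  Since \<open>pinv\<close> is a definite description, existence of Moore--Penrose inverses is needed. If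
  \<open>P\<^sub>R = A K\<^sub>R\<close> and \<open>P\<^sub>C = A\<^sup>T K\<^sub>C\<close> are the orthogonal projections onto the column spaces
  of \<open>A\<close> and \<open>A\<^sup>T\<close> (built one column at a time by rank-one updates), then \<open>P\<^sub>C K\<^sub>R\<close>
  satisfies the four Penrose equations.

  For a proper splitting \<open>A = P - Q\<close> one has \<open>A\<dagger> = P\<dagger> + P\<dagger> Q A\<dagger>\<close>. If \<open>A\<dagger>\<close>, \<open>P\<dagger>\<close> and
  \<open>P\<dagger> Q\<close> are nonnegative, the partial sums \<open>\<Sum>j<k. (P\<dagger> Q)\<^sup>j P\<dagger> = A\<dagger> - (P\<dagger> Q)\<^sup>k A\<dagger>\<close>
  stay between \<open>0\<close> and \<open>A\<dagger>\<close>, so no nonzero \<open>u \<ge> 0\<close> satisfies \<open>u \<le> P\<dagger> Q u\<close>. For the weak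
  regular splitting take \<open>Q = R\<^sub>1 - S\<^sub>1\<close>: an eigenvalue of \<open>T\<^sub>1\<close> of modulus at least one would
  produce such a \<open>u\<close>, hence \<open>\<rho>(T\<^sub>1) < 1\<close>.

  For the comparison, every \<open>s\<close> with \<open>\<rho>(T\<^sub>1) < s < 1\<close> admits a positive \<open>v\<close> with
  \<open>T\<^sub>1 v \<le> s v\<close>. The entrywise bounds \<open>0 \<le> P\<^sub>2\<dagger> R\<^sub>2 \<le> P\<^sub>1\<dagger> R\<^sub>1\<close> and
  \<open>0 \<le> -P\<^sub>2\<dagger> S\<^sub>2 \<le> -P\<^sub>1\<dagger> S\<^sub>1\<close> then give \<open>W\<^sub>1\<^sub>2 v \<le> s v\<close>, so \<open>\<rho>(W\<^sub>1\<^sub>2) \<le> s\<close> by the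
  Collatz--Wielandt bound.
\<close>

section \<open>Existence of the Moore--Penrose inverse\<close>

lemma is_penrose_inverse_transpose:
  assumes "is_penrose_inverse A X"
  shows "is_penrose_inverse A\<^sup>T X\<^sup>T"
proof -
  have A: "A \<in> carrier_mat (dim_row A) (dim_col A)" by auto
  have X: "X \<in> carrier_mat (dim_col A) (dim_row A)"
    and eqs: "A * X * A = A" "X * A * X = X" "(A * X)\<^sup>T = A * X" "(X * A)\<^sup>T = X * A"
    using assms unfolding is_penrose_inverse_def by auto
  have AX: "A * X \<in> carrier_mat (dim_row A) (dim_row A)" and XA: "X * A \<in> carrier_mat (dim_col A) (dim_col A)"
    using A X by auto
  have AT: "A\<^sup>T \<in> carrier_mat (dim_col A) (dim_row A)" and XT: "X\<^sup>T \<in> carrier_mat (dim_row A) (dim_col A)"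
    using A X by auto
  have AXt: "A\<^sup>T * X\<^sup>T = X * A" using transpose_mult[OF X A] eqs(4) by simp
  have XAt: "X\<^sup>T * A\<^sup>T = A * X" using transpose_mult[OF A X] eqs(3) by simp
  show ?thesis unfolding is_penrose_inverse_def
  proof (intro conjI)
    show "X\<^sup>T \<in> carrier_mat (dim_col A\<^sup>T) (dim_row A\<^sup>T)" using X by auto
    have "A\<^sup>T * X\<^sup>T * A\<^sup>T = (A * X * A)\<^sup>T"
      using transpose_mult[OF AX A] transpose_mult[OF A X] assoc_mult_mat[OF AT XT AT] by simp
    then show "A\<^sup>T * X\<^sup>T * A\<^sup>T = A\<^sup>T" using eqs(1) by simp
    have "X\<^sup>T * A\<^sup>T * X\<^sup>T = (X * A * X)\<^sup>T"
      using transpose_mult[OF XA X] transpose_mult[OF X A] assoc_mult_mat[OF XT AT XT] by simp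
    then show "X\<^sup>T * A\<^sup>T * X\<^sup>T = X\<^sup>T" using eqs(2) by simp
    show "(A\<^sup>T * X\<^sup>T)\<^sup>T = A\<^sup>T * X\<^sup>T" using AXt eqs(4) by simp
    show "(X\<^sup>T * A\<^sup>T)\<^sup>T = X\<^sup>T * A\<^sup>T" using XAt eqs(3) by simp
  qed
qed

lemma is_penrose_inverse_absorb:
  assumes X: "is_penrose_inverse A X" and Y: "is_penrose_inverse A Y"
  shows "X = X * (A * Y)"
proof -
  define m n where "m = dim_row A" and "n = dim_col A"
  have A: "A \<in> carrier_mat m n" unfolding m_def n_def by auto
  have Xc: "X \<in> carrier_mat n m" and Yc: "Y \<in> carrier_mat n m"
    and X2: "X * A * X = X" and X3: "(A * X)\<^sup>T = A * X"
    and Y1: "A * Y * A = A" and Y3: "(A * Y)\<^sup>T = A * Y"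
    using X Y unfolding is_penrose_inverse_def m_def n_def by auto
  have AT: "A\<^sup>T \<in> carrier_mat n m" and XT: "X\<^sup>T \<in> carrier_mat m n"
    and AX: "A * X \<in> carrier_mat m m" and AY: "A * Y \<in> carrier_mat m m" using A Xc Yc by auto
  have XAX: "X * (A * X) = X" using X2 assoc_mult_mat[OF Xc A Xc] by simp
  have XtAt: "X\<^sup>T * A\<^sup>T = A * X" using X3 transpose_mult[OF A Xc] by simp
  have AtAY: "A\<^sup>T * (A * Y) = A\<^sup>T" using transpose_mult[OF AY A] Y1 Y3 by simp
  have "X = X * (X\<^sup>T * A\<^sup>T)" using XAX XtAt by simp
  also have "\<dots> = X * (X\<^sup>T * (A\<^sup>T * (A * Y)))" using AtAY by simp
  also have "X\<^sup>T * (A\<^sup>T * (A * Y)) = (A * X) * (A * Y)"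
    using assoc_mult_mat[OF XT AT AY] XtAt by simp
  also have "X * ((A * X) * (A * Y)) = X * (A * Y)"
    using assoc_mult_mat[OF Xc AX AY] XAX by simp
  finally show ?thesis .
qed

lemma is_penrose_inverse_unique:
  assumes X: "is_penrose_inverse A X" and Y: "is_penrose_inverse A Y"
  shows "X = Y"
proof -
  have A: "A \<in> carrier_mat (dim_row A) (dim_col A)" by auto
  have Xc: "X \<in> carrier_mat (dim_col A) (dim_row A)" and Yc: "Y \<in> carrier_mat (dim_col A) (dim_row A)"
    using X Y unfolding is_penrose_inverse_def by auto
  have "Y\<^sup>T = Y\<^sup>T * (A\<^sup>T * X\<^sup>T)"
    by (rule is_penrose_inverse_absorb[OF is_penrose_inverse_transpose[OF Y] is_penrose_inverse_transpose[OF X]])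
  also have "\<dots> = (X * A * Y)\<^sup>T"
    using transpose_mult[OF mult_carrier_mat[OF Xc A] Yc] transpose_mult[OF Xc A] by simp
  finally have "Y = X * A * Y" by (metis transpose_transpose)
  also have "\<dots> = X" using is_penrose_inverse_absorb[OF X Y] assoc_mult_mat[OF Xc A Yc] by simp
  finally show ?thesis ..
qed

definition outer_prod :: "'a :: comm_semiring_0 vec \<Rightarrow> 'a vec \<Rightarrow> 'a mat" where
  "outer_prod u v = mat (dim_vec u) (dim_vec v) (\<lambda>(i, j). u $ i * v $ j)"

lemma outer_prod_carrier [simp]: "outer_prod u v \<in> carrier_mat (dim_vec u) (dim_vec v)"
  and dim_outer_prod [simp]: "dim_row (outer_prod u v) = dim_vec u" "dim_col (outer_prod u v) = dim_vec v"
  and index_outer_prod [simp]: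
    "i < dim_vec u \<Longrightarrow> j < dim_vec v \<Longrightarrow> outer_prod u v $$ (i, j) = u $ i * v $ j"
  unfolding outer_prod_def by auto

lemma mult_outer_prod:
  "A \<in> carrier_mat nr n \<Longrightarrow> u \<in> carrier_vec n \<Longrightarrow> A * outer_prod u v = outer_prod (A *\<^sub>v u) v"
  by (intro eq_matI) (auto simp: scalar_prod_def sum_distrib_right mult.assoc)

lemma outer_prod_mult:
  "B \<in> carrier_mat n nc \<Longrightarrow> v \<in> carrier_vec n \<Longrightarrow> outer_prod u v * B = outer_prod u (B\<^sup>T *\<^sub>v v)"
  by (intro eq_matI) (auto simp: scalar_prod_def sum_distrib_left ac_simps intro!: sum.cong)

lemma outer_prod_mult_vec:
  "v \<in> carrier_vec n \<Longrightarrow> w \<in> carrier_vec n \<Longrightarrow> outer_prod u v *\<^sub>v w = (v \<bullet> w) \<cdot>\<^sub>v u"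
  by (intro eq_vecI) (auto simp: scalar_prod_def sum_distrib_left sum_distrib_right ac_simps)

lemma outer_prod_mult_outer_prod:
  "v \<in> carrier_vec n \<Longrightarrow> w \<in> carrier_vec n \<Longrightarrow> outer_prod u v * outer_prod w z = (v \<bullet> w) \<cdot>\<^sub>m outer_prod u z"
  by (intro eq_matI) (auto simp: scalar_prod_def sum_distrib_left sum_distrib_right ac_simps)

lemma add_smult_outer_prod_mult_vec:
  fixes P :: "'a :: comm_ring_1 mat"
  assumes P: "P \<in> carrier_mat m m" and r: "r \<in> carrier_vec m" and v: "v \<in> carrier_vec m"
  shows "(P + a \<cdot>\<^sub>m outer_prod r r) *\<^sub>v v = P *\<^sub>v v + (a * (r \<bullet> v)) \<cdot>\<^sub>v r"
proof -
  have Q: "outer_prod r r \<in> carrier_mat m m" using outer_prod_carrier[of r r] carrier_vecD[OF r] by simp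
  have "(P + a \<cdot>\<^sub>m outer_prod r r) *\<^sub>v v = P *\<^sub>v v + (a \<cdot>\<^sub>m outer_prod r r) *\<^sub>v v"
    using add_mult_distrib_mat_vec[OF P _ v] Q by simp
  also have "(a \<cdot>\<^sub>m outer_prod r r) *\<^sub>v v = a \<cdot>\<^sub>v (outer_prod r r *\<^sub>v v)" using Q v
    by (intro eq_vecI) (auto simp: scalar_prod_def sum_distrib_left ac_simps)
  also have "\<dots> = (a * (r \<bullet> v)) \<cdot>\<^sub>v r" unfolding outer_prod_mult_vec[OF r v] by (simp add: smult_smult_assoc)
  finally show ?thesis .
qed

lemma scalar_prod_self_pos:
  assumes r: "(r :: real vec) \<in> carrier_vec m" and r0: "r \<noteq> 0\<^sub>v m"
  shows "r \<bullet> r > 0"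
proof -
  obtain i where i: "i < m" "r $ i \<noteq> 0" using r r0 by (metis eq_vecI carrier_vecD index_zero_vec)
  have "0 < r $ i * r $ i" using i by (metis not_real_square_gt_zero)
  also have "\<dots> \<le> (\<Sum>j \<in> {0..<m}. r $ j * r $ j)"
    using i by (intro member_le_sum) auto
  finally show ?thesis using r by (simp add: scalar_prod_def)
qed

lemma symmetric_idempotent_add_outer_prod:
  fixes P :: "real mat"
  assumes P: "P \<in> carrier_mat m m" and sym: "P\<^sup>T = P" and idem: "P * P = P"
    and r: "r \<in> carrier_vec m" and Pr: "P *\<^sub>v r = 0\<^sub>v m" and r0: "r \<noteq> 0\<^sub>v m"
  defines "P' \<equiv> P + (1 / (r \<bullet> r)) \<cdot>\<^sub>m outer_prod r r"
  shows "P'\<^sup>T = P'" and "P' * P' = P'" and "P' *\<^sub>v r = r"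
    and "\<And>w. w \<in> carrier_vec m \<Longrightarrow> P *\<^sub>v w = w \<Longrightarrow> P' *\<^sub>v w = w"
proof -
  define a where "a = 1 / (r \<bullet> r)"
  define Q where "Q = outer_prod r r"
  have s: "r \<bullet> r > 0" using scalar_prod_self_pos[OF r r0] .
  have Q: "Q \<in> carrier_mat m m" and aQ: "a \<cdot>\<^sub>m Q \<in> carrier_mat m m"
    unfolding Q_def using r by auto
  have P'_def': "P' = P + a \<cdot>\<^sub>m Q" unfolding P'_def a_def Q_def ..
  have P'c: "P' \<in> carrier_mat m m" unfolding P'_def' using P aQ by simp
  have "(a \<cdot>\<^sub>m Q)\<^sup>T = a \<cdot>\<^sub>m Q"
    unfolding Q_def by (intro eq_matI) (auto simp: mult.commute)
  then show "P'\<^sup>T = P'" unfolding P'_def' using transpose_add[OF P aQ] sym by simp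
  have "P * Q = outer_prod (P *\<^sub>v r) r" unfolding Q_def by (rule mult_outer_prod[OF P r])
  also have "\<dots> = 0\<^sub>m m m" using Pr r by (intro eq_matI) auto
  finally have PQ: "P * Q = 0\<^sub>m m m" .
  have "Q * P = outer_prod r (P\<^sup>T *\<^sub>v r)" unfolding Q_def by (rule outer_prod_mult[OF P r])
  also have "\<dots> = 0\<^sub>m m m" using sym Pr r by (intro eq_matI) auto
  finally have QP: "Q * P = 0\<^sub>m m m" .
  have QQ: "Q * Q = (r \<bullet> r) \<cdot>\<^sub>m Q" unfolding Q_def using outer_prod_mult_outer_prod[OF r r] .
  have "P * P' = P * P + P * (a \<cdot>\<^sub>m Q)" unfolding P'_def' by (rule mult_add_distrib_mat[OF P P aQ])
  also have "P * (a \<cdot>\<^sub>m Q) = 0\<^sub>m m m" unfolding mult_smult_distrib[OF P Q] PQ by simp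
  finally have PP': "P * P' = P" using idem P by simp
  have "(a \<cdot>\<^sub>m Q) * P' = (a \<cdot>\<^sub>m Q) * P + (a \<cdot>\<^sub>m Q) * (a \<cdot>\<^sub>m Q)"
    unfolding P'_def' using mult_add_distrib_mat[OF aQ P aQ] .
  also have "(a \<cdot>\<^sub>m Q) * P = 0\<^sub>m m m" using mult_smult_assoc_mat[OF Q P] QP by simp
  also have "(a \<cdot>\<^sub>m Q) * (a \<cdot>\<^sub>m Q) = a \<cdot>\<^sub>m (a \<cdot>\<^sub>m ((r \<bullet> r) \<cdot>\<^sub>m Q))"
    using mult_smult_assoc_mat[OF Q aQ] mult_smult_distrib[OF Q Q] QQ by simp
  also have "\<dots> = a \<cdot>\<^sub>m Q" using s Q by (intro eq_matI) (auto simp: a_def)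
  finally have aQP': "(a \<cdot>\<^sub>m Q) * P' = a \<cdot>\<^sub>m Q" using aQ by simp
  have "(P + a \<cdot>\<^sub>m Q) * P' = P * P' + (a \<cdot>\<^sub>m Q) * P'" using add_mult_distrib_mat[OF P aQ P'c] .
  then show "P' * P' = P'" using PP' aQP' P'_def' by simp
  have P'v: "P' *\<^sub>v v = P *\<^sub>v v + (a * (r \<bullet> v)) \<cdot>\<^sub>v r" if v: "v \<in> carrier_vec m" for v
    unfolding P'_def' Q_def by (rule add_smult_outer_prod_mult_vec[OF P r v])
  show "P' *\<^sub>v r = r" using P'v[OF r] Pr r s by (simp add: a_def)
  fix w assume w: "w \<in> carrier_vec m" and Pw: "P *\<^sub>v w = w"
  have "r \<bullet> w = 0"
    using transpose_vec_mult_scalar[OF P w r] Pw Pr sym r w by simp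
  then have "P' *\<^sub>v w = w + 0 \<cdot>\<^sub>v r" using P'v[OF w] Pw by simp
  also have "\<dots> = w" using w r by (intro eq_vecI) auto
  finally show "P' *\<^sub>v w = w" .
qed

lemma mult_unit_vec_eq_col:
  fixes A :: "'a :: semiring_1 mat"
  assumes A: "A \<in> carrier_mat nr n" and j: "j < n"
  shows "A *\<^sub>v unit_vec n j = col A j"
  using col_mult2[OF A one_carrier_mat j] right_mult_one_mat[OF A] j by simp

lemma orthogonal_projection_add_col:
  fixes M P K :: "real mat"
  assumes M: "M \<in> carrier_mat m n" and k: "k < n"
    and P: "P \<in> carrier_mat m m" and K: "K \<in> carrier_mat n m"
    and sym: "P\<^sup>T = P" and idem: "P * P = P" and PMK: "P = M * K"
  obtains P' K' where "P' \<in> carrier_mat m m" "K' \<in> carrier_mat n m" "P'\<^sup>T = P'" "P' * P' = P'"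
    "P' = M * K'" "P' *\<^sub>v col M k = col M k" "\<And>w. w \<in> carrier_vec m \<Longrightarrow> P *\<^sub>v w = w \<Longrightarrow> P' *\<^sub>v w = w"
proof -
  define c where "c = col M k"
  define r where "r = c - P *\<^sub>v c"
  have c: "c \<in> carrier_vec m" unfolding c_def using M k by auto
  have r: "r \<in> carrier_vec m" unfolding r_def using c P by auto
  have c_split: "c = P *\<^sub>v c + r" unfolding r_def using c P by auto
  have PPc: "P *\<^sub>v (P *\<^sub>v c) = P *\<^sub>v c" using assoc_mult_mat_vec[OF P P c] idem by simp
  show ?thesis
  proof (cases "r = 0\<^sub>v m")
    case True
    then have "P *\<^sub>v c = c" using c_split[symmetric] P c by simp
    then show ?thesis using that[OF P K sym idem PMK] by (simp add: c_def)
  next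
    case False
    have Pr: "P *\<^sub>v r = 0\<^sub>v m"
      unfolding r_def using P c PPc by (simp add: mult_minus_distrib_mat_vec)
    define a where "a = 1 / (r \<bullet> r)"
    define d where "d = unit_vec n k - K *\<^sub>v c"
    define P' where "P' = P + a \<cdot>\<^sub>m outer_prod r r"
    define K' where "K' = K + a \<cdot>\<^sub>m outer_prod d r"
    note update = symmetric_idempotent_add_outer_prod[OF P sym idem r Pr False, folded a_def, folded P'_def]
    have d: "d \<in> carrier_vec n" unfolding d_def using K c by auto
    have dr: "outer_prod d r \<in> carrier_mat n m"
      using outer_prod_carrier[of d r] carrier_vecD[OF d] carrier_vecD[OF r] by simp
    have rr: "outer_prod r r \<in> carrier_mat m m"
      using outer_prod_carrier[of r r] carrier_vecD[OF r] by simp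
    have P': "P' \<in> carrier_mat m m" unfolding P'_def by (rule add_carrier_mat) (use rr in simp)
    have K': "K' \<in> carrier_mat n m" unfolding K'_def by (rule add_carrier_mat) (use dr in simp)
    have "M *\<^sub>v d = M *\<^sub>v unit_vec n k - M *\<^sub>v (K *\<^sub>v c)"
      unfolding d_def using M K c by (simp add: mult_minus_distrib_mat_vec)
    also have "\<dots> = r"
      using mult_unit_vec_eq_col[OF M k] assoc_mult_mat_vec[OF M K c] PMK by (simp add: r_def c_def)
    finally have Md: "M *\<^sub>v d = r" .
    have "M * K' = M * K + M * (a \<cdot>\<^sub>m outer_prod d r)"
      unfolding K'_def by (rule mult_add_distrib_mat[OF M K]) (use dr in simp)
    also have "M * (a \<cdot>\<^sub>m outer_prod d r) = a \<cdot>\<^sub>m outer_prod r r"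
      unfolding mult_smult_distrib[OF M dr] mult_outer_prod[OF M d] Md ..
    finally have MK': "P' = M * K'" unfolding P'_def PMK ..
    from c_split have "P' *\<^sub>v c = P' *\<^sub>v (P *\<^sub>v c + r)" by (rule arg_cong)
    also have "\<dots> = P' *\<^sub>v (P *\<^sub>v c) + P' *\<^sub>v r"
      by (rule mult_add_distrib_mat_vec[OF P' _ r]) (use P c in simp)
    also have "\<dots> = P *\<^sub>v c + r" using update(3) update(4)[of "P *\<^sub>v c"] PPc P c by simp
    also have "\<dots> = c" by (rule c_split[symmetric])
    finally have "P' *\<^sub>v col M k = col M k" unfolding c_def .
    then show ?thesis using that[OF P' K' update(1,2) MK'] update(4) by blast
  qed
qed

lemma orthogonal_projection_fixing_cols:
  assumes M: "(M :: real mat) \<in> carrier_mat m n" and "k \<le> n"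
  shows "\<exists>P K. P \<in> carrier_mat m m \<and> K \<in> carrier_mat n m \<and> P\<^sup>T = P \<and> P * P = P \<and> P = M * K
     \<and> (\<forall>j<k. P *\<^sub>v col M j = col M j)"
  using \<open>k \<le> n\<close>
proof (induction k)
  case 0
  show ?case using M by (intro exI[of _ "0\<^sub>m m m"] exI[of _ "0\<^sub>m n m"]) auto
next
  case (Suc k)
  then obtain P K where P: "P \<in> carrier_mat m m" and K: "K \<in> carrier_mat n m" and sym: "P\<^sup>T = P"
    and idem: "P * P = P" and PMK: "P = M * K" and cols: "\<forall>j<k. P *\<^sub>v col M j = col M j" by auto
  obtain P' K' where P': "P' \<in> carrier_mat m m" "K' \<in> carrier_mat n m" "P'\<^sup>T = P'" "P' * P' = P'"
    "P' = M * K'" and new_col: "P' *\<^sub>v col M k = col M k"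
    and old_cols: "\<And>w. w \<in> carrier_vec m \<Longrightarrow> P *\<^sub>v w = w \<Longrightarrow> P' *\<^sub>v w = w"
    using orthogonal_projection_add_col[OF M _ P K sym idem PMK] Suc(2) by (auto simp: Suc_le_eq)
  have "\<forall>j<Suc k. P' *\<^sub>v col M j = col M j"
    using new_col old_cols cols M Suc(2) by (auto simp: less_Suc_eq)
  then show ?case using P' by blast
qed

lemma orthogonal_projection_exists:
  assumes M: "(M :: real mat) \<in> carrier_mat m n"
  obtains P K where "P \<in> carrier_mat m m" "K \<in> carrier_mat n m" "P\<^sup>T = P" "P = M * K" "P * M = M"
proof -
  obtain P K where P: "P \<in> carrier_mat m m" and K: "K \<in> carrier_mat n m" and "P\<^sup>T = P" "P = M * K"
    and cols: "\<forall>j<n. P *\<^sub>v col M j = col M j"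
    using orthogonal_projection_fixing_cols[OF M le_refl] by blast
  moreover have "P * M = M"
  proof (rule mat_col_eqI)
    fix j assume "j < dim_col M"
    then show "col (P * M) j = col M j" using col_mult2[OF P M] cols M by auto
  qed (use P M in auto)
  ultimately show ?thesis using that by blast
qed

lemma is_penrose_inverse_exists: "\<exists>X. is_penrose_inverse (A :: real mat) X"
proof -
  define m n where "m = dim_row A" and "n = dim_col A"
  have A: "A \<in> carrier_mat m n" and AT: "A\<^sup>T \<in> carrier_mat n m" unfolding m_def n_def by auto
  obtain PR KR where PR: "PR \<in> carrier_mat m m" and KR: "KR \<in> carrier_mat n m" and PRs: "PR\<^sup>T = PR"
    and PRK: "PR = A * KR" and PRA: "PR * A = A" using orthogonal_projection_exists[OF A] .
  obtain PC KC where PC: "PC \<in> carrier_mat n n" and KC: "KC \<in> carrier_mat m n" and PCs: "PC\<^sup>T = PC"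
    and PCK: "PC = A\<^sup>T * KC" and PCA: "PC * A\<^sup>T = A\<^sup>T" using orthogonal_projection_exists[OF AT] .
  have KCT: "KC\<^sup>T \<in> carrier_mat n m" using KC by auto
  have APC: "A * PC = A" using arg_cong[OF PCA, of transpose_mat] transpose_mult[OF PC AT] PCs by simp
  have PCt: "PC = KC\<^sup>T * A" using arg_cong[OF PCK, of transpose_mat] transpose_mult[OF AT KC] PCs by simp
  have PCPC: "PC * PC = PC"
    using assoc_mult_mat[OF KCT A PC] APC by (simp flip: PCt)
  define X where "X = PC * KR"
  have AX: "A * X = PR" unfolding X_def PRK using assoc_mult_mat[OF A PC KR] APC by simp
  have XA: "X * A = PC"
  proof -
    have "X * A = KC\<^sup>T * ((A * KR) * A)"
      unfolding X_def PCt using assoc_mult_mat[OF KCT A KR] assoc_mult_mat[OF KCT mult_carrier_mat[OF A KR] A]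
      by simp
    then show ?thesis using PRK PRA PCt by simp
  qed
  have "is_penrose_inverse A X" unfolding is_penrose_inverse_def
  proof (intro conjI)
    show "X \<in> carrier_mat (dim_col A) (dim_row A)" unfolding X_def using PC KR m_def n_def by simp
    show "A * X * A = A" using AX PRA by simp
    show "X * A * X = X" using XA assoc_mult_mat[OF PC PC KR] PCPC by (simp add: X_def)
    show "(A * X)\<^sup>T = A * X" using AX PRs by simp
    show "(X * A)\<^sup>T = X * A" using XA PCs by simp
  qed
  then show ?thesis ..
qed

lemma pinv_is_penrose_inverse: "is_penrose_inverse A (pinv A)"
  unfolding pinv_def
  by (rule theI') (use is_penrose_inverse_exists is_penrose_inverse_unique in blast)

lemma pinv_carrier_mat: "A \<in> carrier_mat m n \<Longrightarrow> pinv A \<in> carrier_mat n m"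
  using pinv_is_penrose_inverse[of A] unfolding is_penrose_inverse_def by auto

lemma mult_pinv_mult: "A * pinv A * A = A"
  and pinv_mult_pinv: "pinv A * A * pinv A = pinv A"
  and transpose_mult_pinv: "(A * pinv A)\<^sup>T = A * pinv A"
  and transpose_pinv_mult: "(pinv A * A)\<^sup>T = pinv A * A"
  using pinv_is_penrose_inverse[of A] unfolding is_penrose_inverse_def by auto

section \<open>Proper splittings\<close>

lemma mat_range_mult_subset:
  assumes A: "A \<in> carrier_mat m n" and B: "B \<in> carrier_mat n k"
  shows "mat_range (A * B) \<subseteq> mat_range A"
proof
  fix y assume "y \<in> mat_range (A * B)"
  then obtain x where x: "x \<in> carrier_vec k" and y: "y = (A * B) *\<^sub>v x"
    unfolding mat_range_def using B by auto
  have "y = A *\<^sub>v (B *\<^sub>v x)" using y assoc_mult_mat_vec[OF A B x] by simp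
  then show "y \<in> mat_range A" unfolding mat_range_def using A B x by auto
qed

lemma mult_pinv_mult_eq_if_range_subset:
  fixes B C :: "real mat"
  assumes B: "B \<in> carrier_mat m n" and C: "C \<in> carrier_mat m k"
    and rng: "mat_range C \<subseteq> mat_range B"
  shows "B * pinv B * C = C"
proof (rule mat_col_eqI)
  have BB: "B * pinv B \<in> carrier_mat m m" using B pinv_carrier_mat[OF B] by auto
  fix j assume "j < dim_col C"
  then have j: "j < k" using C by auto
  have "col C j = C *\<^sub>v unit_vec k j" "unit_vec k j \<in> carrier_vec (dim_col C)"
    using mult_unit_vec_eq_col[OF C j] C by auto
  then have "col C j \<in> mat_range C" unfolding mat_range_def by blast
  then obtain x where x: "x \<in> carrier_vec n" and cx: "col C j = B *\<^sub>v x"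
    using rng B unfolding mat_range_def by auto
  have "col (B * pinv B * C) j = (B * pinv B * B) *\<^sub>v x"
    using col_mult2[OF BB C j] cx assoc_mult_mat_vec[OF BB B x] by simp
  then show "col (B * pinv B * C) j = col C j" using cx mult_pinv_mult by simp
qed (use B C pinv_carrier_mat[OF B] in auto)

lemma mult_pinv_mult_eq_if_null_subset:
  fixes B C :: "real mat"
  assumes B: "B \<in> carrier_mat m n" and C: "C \<in> carrier_mat k n"
    and nul: "mat_null B \<subseteq> mat_null C"
  shows "C * (pinv B * B) = C"
proof -
  have BB: "pinv B * B \<in> carrier_mat n n" using B pinv_carrier_mat[OF B] by auto
  have Cx: "C *\<^sub>v ((pinv B * B) *\<^sub>v x) = C *\<^sub>v x" if x: "x \<in> carrier_vec n" for x
  proof -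
    define w where "w = x - (pinv B * B) *\<^sub>v x"
    have w: "w \<in> carrier_vec n" unfolding w_def using x BB by auto
    have "B *\<^sub>v ((pinv B * B) *\<^sub>v x) = B *\<^sub>v x"
      using assoc_mult_mat_vec[OF B BB x] assoc_mult_mat[OF B pinv_carrier_mat[OF B] B] mult_pinv_mult[of B]
      by simp
    then have "B *\<^sub>v w = 0\<^sub>v m" unfolding w_def using B BB x by (simp add: mult_minus_distrib_mat_vec)
    then have "w \<in> mat_null C" using nul mat_kernelI[OF B w] unfolding mat_null_def by auto
    then have "C *\<^sub>v w = 0\<^sub>v k" using mat_kernelD[OF C] unfolding mat_null_def by auto
    then have diff: "C *\<^sub>v x - C *\<^sub>v ((pinv B * B) *\<^sub>v x) = 0\<^sub>v k"
      unfolding w_def using C BB x by (simp add: mult_minus_distrib_mat_vec)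
    show ?thesis
    proof (rule eq_vecI)
      fix i assume "i < dim_vec (C *\<^sub>v x)"
      then have i: "i < k" using C by simp
      have "(C *\<^sub>v x - C *\<^sub>v ((pinv B * B) *\<^sub>v x)) $ i = 0" using diff i by simp
      then show "(C *\<^sub>v ((pinv B * B) *\<^sub>v x)) $ i = (C *\<^sub>v x) $ i" using i C BB x by simp
    qed (use C BB in simp)
  qed
  show ?thesis
  proof (rule mat_col_eqI)
    fix j assume "j < dim_col C"
    then have j: "j < n" using C by auto
    have "col (C * (pinv B * B)) j = C *\<^sub>v ((pinv B * B) *\<^sub>v unit_vec n j)"
      using col_mult2[OF C BB j] mult_unit_vec_eq_col[OF BB j] by simp
    also have "\<dots> = col C j" using Cx[of "unit_vec n j"] mult_unit_vec_eq_col[OF C j] by simp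
    finally show "col (C * (pinv B * B)) j = col C j" .
  qed (use B C BB in auto)
qed

lemma symmetric_mat_eq_if_mult:
  fixes E F :: "'a :: comm_ring_1 mat"
  assumes E: "E \<in> carrier_mat n n" and F: "F \<in> carrier_mat n n"
    and "E\<^sup>T = E" "F\<^sup>T = F" and "E * F = E" and "F * E = F"
  shows "E = F"
  using assms transpose_mult[OF E F] by metis

lemma mult_pinv_eq_if_range_eq:
  fixes A P :: "real mat"
  assumes A: "A \<in> carrier_mat m n" and P: "P \<in> carrier_mat m n" and rng: "mat_range P = mat_range A"
  shows "A * pinv A = P * pinv P"
proof -
  have G: "pinv P \<in> carrier_mat n m" and Ad: "pinv A \<in> carrier_mat n m"
    using pinv_carrier_mat A P by auto
  have PG: "P * pinv P \<in> carrier_mat m m" and AAd: "A * pinv A \<in> carrier_mat m m" using P G A Ad by auto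
  have sym: "(A * pinv A)\<^sup>T = A * pinv A" "(P * pinv P)\<^sup>T = P * pinv P" by (rule transpose_mult_pinv)+
  have AAd_PG: "A * pinv A * (P * pinv P) = P * pinv P"
    by (rule mult_pinv_mult_eq_if_range_subset[OF A PG]) (use rng mat_range_mult_subset[OF P G] in auto)
  have PG_AAd: "P * pinv P * (A * pinv A) = A * pinv A"
    by (rule mult_pinv_mult_eq_if_range_subset[OF P AAd]) (use rng mat_range_mult_subset[OF A Ad] in auto)
  show ?thesis
  proof (rule symmetric_mat_eq_if_mult[OF AAd PG sym])
    show "A * pinv A * (P * pinv P) = A * pinv A"
      using arg_cong[OF PG_AAd, of transpose_mat] transpose_mult[OF PG AAd] sym by simp
    show "P * pinv P * (A * pinv A) = P * pinv P"
      using arg_cong[OF AAd_PG, of transpose_mat] transpose_mult[OF AAd PG] sym by simp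
  qed
qed

lemma pinv_mult_eq_if_null_eq:
  fixes A P :: "real mat"
  assumes A: "A \<in> carrier_mat m n" and P: "P \<in> carrier_mat m n" and nul: "mat_null P = mat_null A"
  shows "pinv A * A = pinv P * P"
proof (rule symmetric_mat_eq_if_mult)
  have G: "pinv P \<in> carrier_mat n m" and Ad: "pinv A \<in> carrier_mat n m"
    using pinv_carrier_mat A P by auto
  show GP: "pinv P * P \<in> carrier_mat n n" and AdA: "pinv A * A \<in> carrier_mat n n" using P G A Ad by auto
  show "(pinv A * A)\<^sup>T = pinv A * A" "(pinv P * P)\<^sup>T = pinv P * P" by (rule transpose_pinv_mult)+
  show "pinv A * A * (pinv P * P) = pinv A * A"
    using assoc_mult_mat[OF Ad A GP] mult_pinv_mult_eq_if_null_subset[OF P A] nul by simp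
  show "pinv P * P * (pinv A * A) = pinv P * P"
    using assoc_mult_mat[OF G P AdA] mult_pinv_mult_eq_if_null_subset[OF A P] nul by simp
qed

lemma proper_splitting_pinv:
  fixes A P :: "real mat"
  assumes A: "A \<in> carrier_mat m n" and P: "P \<in> carrier_mat m n"
    and rng: "mat_range P = mat_range A" and nul: "mat_null P = mat_null A"
  shows "pinv A = pinv P + pinv P * (P - A) * pinv A"
proof -
  define G Ad where "G = pinv P" and "Ad = pinv A"
  have G: "G \<in> carrier_mat n m" and Ad: "Ad \<in> carrier_mat n m"
    unfolding G_def Ad_def using pinv_carrier_mat A P by auto
  have GP: "G * P \<in> carrier_mat n n" and GA: "G * A \<in> carrier_mat n n" using P G A by auto
  have "G * (P - A) * Ad = G * P * Ad - G * A * Ad"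
    using mult_minus_distrib_mat[OF G P A] minus_mult_distrib_mat[OF GP GA Ad] by simp
  also have "G * P * Ad = Ad"
    using pinv_mult_eq_if_null_eq[OF A P nul] pinv_mult_pinv[of A] by (simp add: G_def Ad_def)
  also have "G * A * Ad = G"
    using assoc_mult_mat[OF G A Ad] mult_pinv_eq_if_range_eq[OF A P rng] assoc_mult_mat[OF G P G]
      pinv_mult_pinv[of P] by (simp add: G_def Ad_def)
  finally have "G * (P - A) * Ad = Ad - G" .
  then show ?thesis unfolding G_def[symmetric] Ad_def[symmetric] using G Ad
    by (intro eq_matI) auto
qed

section \<open>Nonnegative matrices and the spectral radius\<close>

lemma nonneg_mult_mat:
  fixes A B :: "'a :: linordered_idom mat"
  assumes "0\<^sub>m nr n \<le> A" and "0\<^sub>m n nc \<le> B"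
  shows "0\<^sub>m nr nc \<le> A * B"
  using assms unfolding less_eq_mat_def by (auto simp: scalar_prod_def intro!: sum_nonneg)

lemma nonneg_pow_mat:
  fixes A :: "'a :: linordered_idom mat"
  assumes A: "0\<^sub>m n n \<le> A"
  shows "0\<^sub>m n n \<le> A ^\<^sub>m k"
proof (induction k)
  case 0
  then show ?case using A by (auto simp: less_eq_mat_def)
next
  case (Suc k)
  then show ?case using nonneg_mult_mat[OF Suc.IH A] by simp
qed

lemma mult_mat_vec_mono:
  fixes M :: "'a :: linordered_idom mat"
  assumes "0\<^sub>m nr nc \<le> M" and "u \<le> v" and "v \<in> carrier_vec nc"
  shows "M *\<^sub>v u \<le> M *\<^sub>v v"
  using assms unfolding less_eq_mat_def less_eq_vec_def
  by (auto simp: scalar_prod_def intro!: sum_mono mult_left_mono)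

lemma mult_mat_vec_mono_mat:
  fixes M N :: "'a :: linordered_idom mat"
  assumes "M \<le> N" and "0\<^sub>v nc \<le> u" and "M \<in> carrier_mat nr nc"
  shows "M *\<^sub>v u \<le> N *\<^sub>v u"
  using assms unfolding less_eq_mat_def less_eq_vec_def
  by (auto simp: scalar_prod_def intro!: sum_mono mult_right_mono)

lemma nonneg_mult_mat_vec:
  fixes M :: "'a :: linordered_idom mat"
  assumes "0\<^sub>m nr nc \<le> M" and "0\<^sub>v nc \<le> u"
  shows "0\<^sub>v nr \<le> M *\<^sub>v u"
  using assms unfolding less_eq_mat_def less_eq_vec_def
  by (auto simp: scalar_prod_def intro!: sum_nonneg)

lemma nonneg_add_mat:
  fixes A B :: "'a :: ordered_comm_monoid_add mat"
  shows "0\<^sub>m nr nc \<le> A \<Longrightarrow> 0\<^sub>m nr nc \<le> B \<Longrightarrow> 0\<^sub>m nr nc \<le> A + B"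
  unfolding less_eq_mat_def by auto

lemma nonneg_uminus_mat:
  fixes M :: "'a :: ordered_ab_group_add mat"
  shows "M \<le> 0\<^sub>m nr nc \<Longrightarrow> 0\<^sub>m nr nc \<le> - M"
  unfolding less_eq_mat_def by auto

lemma uminus_mat_mono:
  fixes M N :: "'a :: ordered_ab_group_add mat"
  shows "M \<le> N \<Longrightarrow> - N \<le> - M"
  unfolding less_eq_mat_def by auto

lemma add_mono_vec:
  fixes a b c d :: "'a :: ordered_ab_semigroup_add vec"
  assumes "a \<le> b" and "c \<le> d" and "dim_vec c = dim_vec a"
  shows "a + c \<le> b + d"
  using assms unfolding less_eq_vec_def by (auto intro: add_mono)

lemma smult_mono_vec:
  fixes u v :: "'a :: linordered_idom vec"
  assumes "u \<le> v" and "0 \<le> a"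
  shows "a \<cdot>\<^sub>v u \<le> a \<cdot>\<^sub>v v"
  using assms unfolding less_eq_vec_def by (auto intro: mult_left_mono)

definition abs_vec :: "complex vec \<Rightarrow> real vec" where
  "abs_vec z = vec (dim_vec z) (\<lambda>i. cmod (z $ i))"

lemma abs_vec_carrier [simp]: "z \<in> carrier_vec n \<Longrightarrow> abs_vec z \<in> carrier_vec n"
  and index_abs_vec [simp]: "i < dim_vec z \<Longrightarrow> abs_vec z $ i = cmod (z $ i)"
  and dim_abs_vec [simp]: "dim_vec (abs_vec z) = dim_vec z"
  unfolding abs_vec_def by auto

lemma abs_vec_mult_mat_vec_le:
  fixes M :: "real mat"
  assumes M: "0\<^sub>m nr nc \<le> M" and z: "z \<in> carrier_vec nc"
  shows "abs_vec (map_mat complex_of_real M *\<^sub>v z) \<le> M *\<^sub>v abs_vec z"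
proof -
  have Mc: "M \<in> carrier_mat nr nc" and M0: "\<And>i j. i < nr \<Longrightarrow> j < nc \<Longrightarrow> 0 \<le> M $$ (i, j)"
    using M unfolding less_eq_mat_def by auto
  have "cmod ((map_mat complex_of_real M *\<^sub>v z) $ i) \<le> (M *\<^sub>v abs_vec z) $ i" if i: "i < nr" for i
  proof -
    have "(map_mat complex_of_real M *\<^sub>v z) $ i = (\<Sum>j<nc. complex_of_real (M $$ (i, j)) * z $ j)"
      using Mc z i by (auto simp: scalar_prod_def lessThan_atLeast0)
    then have "cmod ((map_mat complex_of_real M *\<^sub>v z) $ i) \<le> (\<Sum>j<nc. cmod (complex_of_real (M $$ (i, j)) * z $ j))"
      by (simp add: norm_sum)
    also have "\<dots> = (M *\<^sub>v abs_vec z) $ i"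
      using Mc z i M0 by (auto simp: scalar_prod_def lessThan_atLeast0 norm_mult intro!: sum.cong)
    finally show ?thesis .
  qed
  then show ?thesis using Mc z unfolding less_eq_vec_def by auto
qed

lemma rho_eigenvector:
  assumes M: "M \<in> carrier_mat n n" and n: "0 < n"
  obtains mu w where "eigenvector (map_mat complex_of_real M) w mu" and "rho M = cmod mu"
proof -
  have "map_mat complex_of_real M \<in> carrier_mat n n" using M by simp
  then obtain mu where "mu \<in> spectrum (map_mat complex_of_real M)" and "rho M = cmod mu"
    using spectral_radius_mem_max(1)[OF _ n] unfolding rho_def by blast
  then show ?thesis using that unfolding spectrum_def eigenvalue_def by auto
qed

lemma rho_nonneg: "M \<in> carrier_mat n n \<Longrightarrow> 0 < n \<Longrightarrow> 0 \<le> rho M"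
  by (metis norm_ge_zero rho_eigenvector)

lemma rho_le_if_subinvariant:
  fixes M :: "real mat"
  assumes M: "0\<^sub>m n n \<le> M" and n: "0 < n"
    and v: "v \<in> carrier_vec n" and v_pos: "\<And>i. i < n \<Longrightarrow> 0 < v $ i"
    and Mv: "M *\<^sub>v v \<le> s \<cdot>\<^sub>v v"
  shows "rho M \<le> s"
proof -
  have Mc: "M \<in> carrier_mat n n" using M unfolding less_eq_mat_def by auto
  obtain mu w where ev: "eigenvector (map_mat complex_of_real M) w mu" and r: "rho M = cmod mu"
    using rho_eigenvector[OF Mc n] .
  have w: "w \<in> carrier_vec n" and w0: "w \<noteq> 0\<^sub>v n" and Mw: "map_mat complex_of_real M *\<^sub>v w = mu \<cdot>\<^sub>v w"
    using ev Mc unfolding eigenvector_def by auto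
  define f where "f i = cmod (w $ i) / v $ i" for i
  have "Max (f ` {..<n}) \<in> f ` {..<n}" using n by (intro Max_in) auto
  then obtain i0 where i0: "i0 < n" and i0_max: "f i0 = Max (f ` {..<n})" by auto
  have f_max: "f i \<le> f i0" if "i < n" for i unfolding i0_max using that by (intro Max_ge) auto
  define t where "t = f i0"
  have "\<exists>i<n. w $ i \<noteq> 0"
  proof (rule ccontr)
    assume "\<not> ?thesis"
    then have "w = 0\<^sub>v n" using w by (intro eq_vecI) auto
    with w0 show False by simp
  qed
  then obtain i1 where i1: "i1 < n" "w $ i1 \<noteq> 0" by blast
  have "0 < f i1" unfolding f_def using i1 v_pos[OF i1(1)] by simp
  then have t: "0 < t" unfolding t_def using f_max[OF i1(1)] by simp
  have w_le: "abs_vec w \<le> t \<cdot>\<^sub>v v"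
    using f_max v_pos w v unfolding less_eq_vec_def t_def f_def by (auto simp: divide_le_eq)
  have "cmod mu \<cdot>\<^sub>v abs_vec w = abs_vec (map_mat complex_of_real M *\<^sub>v w)"
    unfolding Mw using w by (intro eq_vecI) (auto simp: norm_mult)
  also have "\<dots> \<le> M *\<^sub>v abs_vec w" using abs_vec_mult_mat_vec_le[OF M w] .
  also have "\<dots> \<le> M *\<^sub>v (t \<cdot>\<^sub>v v)" using mult_mat_vec_mono[OF M w_le] v by simp
  also have "\<dots> = t \<cdot>\<^sub>v (M *\<^sub>v v)" using Mc v by (simp add: mult_mat_vec)
  also have "\<dots> \<le> t \<cdot>\<^sub>v (s \<cdot>\<^sub>v v)" using Mv t unfolding less_eq_vec_def by auto
  finally have "cmod mu * cmod (w $ i0) \<le> t * (s * v $ i0)"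
    using i0 w v unfolding less_eq_vec_def by auto
  moreover have "t * v $ i0 = cmod (w $ i0)" using v_pos[OF i0] unfolding t_def f_def by simp
  moreover have "0 < cmod (w $ i0)" using t v_pos[OF i0] unfolding t_def f_def by (simp add: zero_less_divide_iff)
  ultimately show ?thesis unfolding r by (simp add: mult.left_commute)
qed

lemma spectral_radius_smult_le:
  fixes A :: "complex mat"
  assumes A: "A \<in> carrier_mat n n" and n: "0 < n" and a: "a \<noteq> 0"
  shows "spectral_radius (a \<cdot>\<^sub>m A) \<le> cmod a * spectral_radius A"
proof -
  have aA: "a \<cdot>\<^sub>m A \<in> carrier_mat n n" using A by simp
  obtain mu where "mu \<in> spectrum (a \<cdot>\<^sub>m A)" and sr: "spectral_radius (a \<cdot>\<^sub>m A) = cmod mu"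
    using spectral_radius_mem_max(1)[OF aA n] by auto
  then obtain w where "eigenvector (a \<cdot>\<^sub>m A) w mu" unfolding spectrum_def eigenvalue_def by auto
  then have w: "w \<in> carrier_vec n" "w \<noteq> 0\<^sub>v n" and ev: "(a \<cdot>\<^sub>m A) *\<^sub>v w = mu \<cdot>\<^sub>v w"
    using aA unfolding eigenvector_def by auto
  have "(a \<cdot>\<^sub>m A) *\<^sub>v w = a \<cdot>\<^sub>v (A *\<^sub>v w)"
    using A w by (intro eq_vecI) (auto simp: scalar_prod_def sum_distrib_left ac_simps)
  then have "A *\<^sub>v w = (1 / a) \<cdot>\<^sub>v (mu \<cdot>\<^sub>v w)" using ev a by (simp add: smult_smult_assoc)
  then have "eigenvector A w (mu / a)" using w A unfolding eigenvector_def by (simp add: smult_smult_assoc)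
  then have "cmod (mu / a) \<le> spectral_radius A"
    using spectral_radius_mem_max(2)[OF A n] unfolding spectrum_def eigenvalue_def by blast
  then show ?thesis using a sr by (simp add: norm_divide divide_le_eq mult.commute)
qed

lemma smult_pow_mat:
  fixes A :: "'a :: comm_semiring_1 mat"
  assumes A: "A \<in> carrier_mat n n"
  shows "(a \<cdot>\<^sub>m A) ^\<^sub>m k = a ^ k \<cdot>\<^sub>m A ^\<^sub>m k"
proof (induction k)
  case 0
  then show ?case by (intro eq_matI) auto
next
  case (Suc k)
  have "(a \<cdot>\<^sub>m A) ^\<^sub>m Suc k = a ^ k \<cdot>\<^sub>m (A ^\<^sub>m k * (a \<cdot>\<^sub>m A))"
    using Suc.IH mult_smult_assoc_mat[of "A ^\<^sub>m k" n n "a \<cdot>\<^sub>m A" n] A by simp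
  also have "\<dots> = a ^ Suc k \<cdot>\<^sub>m A ^\<^sub>m Suc k"
    using mult_smult_distrib[of "A ^\<^sub>m k" n n A n a] A by (intro eq_matI) (auto simp: ac_simps)
  finally show ?case .
qed

lemma mult_pow_mat_Suc:
  fixes A :: "'a :: semiring_1 mat"
  assumes A: "A \<in> carrier_mat n n"
  shows "A * A ^\<^sub>m k = A ^\<^sub>m Suc k"
proof (induction k)
  case 0
  then show ?case using A by simp
next
  case (Suc k)
  have "A * A ^\<^sub>m Suc k = (A * A ^\<^sub>m k) * A" using assoc_mult_mat[OF A pow_carrier_mat[OF A] A] by simp
  then show ?case using Suc.IH by simp
qed

lemma pow_mat_entries_bound:
  fixes M :: "real mat"
  assumes M: "M \<in> carrier_mat n n" and n: "0 < n" and c: "rho M < c"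
  obtains C where "\<And>k i j. i < n \<Longrightarrow> j < n \<Longrightarrow> (M ^\<^sub>m k) $$ (i, j) \<le> C * c ^ k"
proof -
  have c0: "0 < c" using rho_nonneg[OF M n] c by linarith
  define Mc where "Mc = map_mat complex_of_real M"
  define B where "B = complex_of_real (1 / c) \<cdot>\<^sub>m Mc"
  have Mc: "Mc \<in> carrier_mat n n" and B: "B \<in> carrier_mat n n" unfolding B_def Mc_def using M by auto
  have "spectral_radius B \<le> cmod (complex_of_real (1 / c)) * spectral_radius Mc"
    unfolding B_def by (rule spectral_radius_smult_le[OF Mc n]) (use c0 in simp)
  also have "cmod (complex_of_real (1 / c)) = 1 / c" using c0 by (subst norm_of_real) simp
  also have "1 / c * spectral_radius Mc < 1"
    using c c0 unfolding rho_def Mc_def by (simp add: divide_less_eq)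
  finally obtain C where C: "\<And>k. norm_bound (B ^\<^sub>m k) C"
    using spectral_radius_jnf_norm_bound_less_1_upper_triangular[OF B] by auto
  have "(M ^\<^sub>m k) $$ (i, j) \<le> C * c ^ k" if ij: "i < n" "j < n" for k i j
  proof -
    have "B ^\<^sub>m k = complex_of_real (1 / c) ^ k \<cdot>\<^sub>m map_mat complex_of_real (M ^\<^sub>m k)"
      unfolding B_def Mc_def by (simp add: smult_pow_mat[OF Mc[unfolded Mc_def]] of_real_hom.mat_hom_pow[OF M])
    then have eq: "(B ^\<^sub>m k) $$ (i, j) = complex_of_real ((M ^\<^sub>m k) $$ (i, j) / c ^ k)"
      using ij M by (simp add: power_divide)
    have "cmod ((B ^\<^sub>m k) $$ (i, j)) \<le> C" using C[of k] ij B unfolding norm_bound_def by auto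
    then have "\<bar>(M ^\<^sub>m k) $$ (i, j) / c ^ k\<bar> \<le> C" unfolding eq norm_of_real .
    then have "(M ^\<^sub>m k) $$ (i, j) / c ^ k \<le> C" by linarith
    then show ?thesis using c0 by (simp add: divide_le_eq)
  qed
  then show ?thesis using that by blast
qed

lemma pow_mat_mult_ones_le:
  fixes M :: "real mat"
  assumes M: "M \<in> carrier_mat n n" and n: "0 < n" and s: "rho M < s"
  obtains K where "0 < K" and "M ^\<^sub>m K *\<^sub>v vec n (\<lambda>_. 1) \<le> s ^ K \<cdot>\<^sub>v vec n (\<lambda>_. 1)"
proof -
  define c where "c = (rho M + s) / 2"
  have c: "rho M < c" "c < s" "0 < c" using s rho_nonneg[OF M n] unfolding c_def by auto
  obtain C where C: "\<And>k i j. i < n \<Longrightarrow> j < n \<Longrightarrow> (M ^\<^sub>m k) $$ (i, j) \<le> C * c ^ k"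
    using pow_mat_entries_bound[OF M n c(1)] by blast
  have "(\<lambda>K. real n * C * (c / s) ^ K) \<longlonglongrightarrow> 0"
    by (intro tendsto_mult_right_zero LIMSEQ_power_zero) (use c in simp)
  then have "\<forall>\<^sub>F K in sequentially. real n * C * (c / s) ^ K < 1"
    by (rule order_tendstoD(2)) simp
  then have "\<forall>\<^sub>F K in sequentially. real n * C * (c / s) ^ K < 1 \<and> 0 < K"
    using eventually_gt_at_top by (rule eventually_conj)
  then obtain K where K: "real n * C * (c / s) ^ K < 1" "0 < K"
    by (auto simp: eventually_sequentially)
  have "(M ^\<^sub>m K *\<^sub>v vec n (\<lambda>_. 1)) $ i \<le> s ^ K" if i: "i < n" for i
  proof -
    have "(M ^\<^sub>m K *\<^sub>v vec n (\<lambda>_. 1)) $ i = (\<Sum>j<n. (M ^\<^sub>m K) $$ (i, j))"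
      using M i by (auto simp: scalar_prod_def lessThan_atLeast0)
    also have "\<dots> \<le> (\<Sum>j<n. C * c ^ K)" by (intro sum_mono C i) simp
    also have "\<dots> = (real n * C * (c / s) ^ K) * s ^ K" using c by (simp add: power_divide)
    also have "\<dots> \<le> 1 * s ^ K" using K c by (intro mult_right_mono) auto
    finally show ?thesis by simp
  qed
  then show ?thesis using that K M unfolding less_eq_vec_def by auto
qed

lemma mult_mat_vec_sum_index:
  fixes M :: "'a :: field mat"
  assumes M: "M \<in> carrier_mat n n" and w: "\<And>k. w k \<in> carrier_vec n" and i: "i < n"
  shows "(M *\<^sub>v vec n (\<lambda>l. \<Sum>k<K. w k $ l / c k)) $ i = (\<Sum>k<K. (M *\<^sub>v w k) $ i / c k)"
proof -
  have "(M *\<^sub>v vec n (\<lambda>l. \<Sum>k<K. w k $ l / c k)) $ i = (\<Sum>l<n. M $$ (i, l) * (\<Sum>k<K. w k $ l / c k))"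
    using M i by (simp add: scalar_prod_def lessThan_atLeast0)
  also have "\<dots> = (\<Sum>l<n. \<Sum>k<K. M $$ (i, l) * w k $ l / c k)" by (simp add: sum_distrib_left)
  also have "\<dots> = (\<Sum>k<K. \<Sum>l<n. M $$ (i, l) * w k $ l / c k)" by (rule sum.swap)
  also have "\<dots> = (\<Sum>k<K. (\<Sum>l<n. M $$ (i, l) * w k $ l) / c k)" by (simp add: sum_divide_distrib)
  also have "\<dots> = (\<Sum>k<K. (M *\<^sub>v w k) $ i / c k)"
  proof (rule sum.cong[OF refl])
    fix k
    have "(M *\<^sub>v w k) $ i = (\<Sum>l<n. M $$ (i, l) * w k $ l)"
      using M i w[of k] by (auto simp: scalar_prod_def lessThan_atLeast0 intro!: sum.cong)
    then show "(\<Sum>l<n. M $$ (i, l) * w k $ l) / c k = (M *\<^sub>v w k) $ i / c k" by simp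
  qed
  finally show ?thesis .
qed

text \<open>The truncated Neumann series \<open>\<Sum>k<K. (M / s)^k 1\<close> is a positive subinvariant vector.\<close>

lemma exists_pos_subinvariant_vec:
  fixes M :: "real mat"
  assumes M: "0\<^sub>m n n \<le> M" and n: "0 < n" and s: "rho M < s"
  obtains v where "v \<in> carrier_vec n" and "\<And>i. i < n \<Longrightarrow> 0 < v $ i" and "M *\<^sub>v v \<le> s \<cdot>\<^sub>v v"
proof -
  have Mc: "M \<in> carrier_mat n n" using M unfolding less_eq_mat_def by auto
  have s0: "0 < s" using s rho_nonneg[OF Mc n] by linarith
  define e :: "real vec" where "e = vec n (\<lambda>_. 1)"
  obtain K where K: "0 < K" and MK: "M ^\<^sub>m K *\<^sub>v e \<le> s ^ K \<cdot>\<^sub>v e"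
    using pow_mat_mult_ones_le[OF Mc n s] unfolding e_def by blast
  define w where "w k = M ^\<^sub>m k *\<^sub>v e" for k
  define v where "v = vec n (\<lambda>i. \<Sum>k<K. w k $ i / s ^ k)"
  have w_nonneg: "0 \<le> w k $ i" if "i < n" for k i
    using nonneg_mult_mat_vec[OF nonneg_pow_mat[OF M], of e k] that unfolding w_def e_def less_eq_vec_def by auto
  have w0: "w 0 $ i = 1" if "i < n" for i
    using that Mc unfolding w_def e_def by simp
  have wK: "w K $ i \<le> s ^ K" if "i < n" for i
    using MK that unfolding w_def e_def less_eq_vec_def by auto
  have w_Suc: "(M *\<^sub>v w k) $ i = w (Suc k) $ i" if "i < n" for k i
  proof -
    have "M *\<^sub>v w k = (M * M ^\<^sub>m k) *\<^sub>v e"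
      unfolding w_def using assoc_mult_mat_vec[of M n n "M ^\<^sub>m k" n e] Mc by (simp add: e_def)
    also have "M * M ^\<^sub>m k = M ^\<^sub>m Suc k" by (rule mult_pow_mat_Suc[OF Mc])
    finally show ?thesis unfolding w_def by simp
  qed
  have vc: "v \<in> carrier_vec n" unfolding v_def by simp
  show ?thesis
  proof
    show "v \<in> carrier_vec n" by (rule vc)
    fix i assume i: "i < n"
    have "0 < w 0 $ i / s ^ 0" using w0[OF i] by simp
    also have "\<dots> \<le> (\<Sum>k<K. w k $ i / s ^ k)"
      using K w_nonneg[OF i] s0 by (intro member_le_sum) auto
    finally show "0 < v $ i" unfolding v_def using i by simp
  next
    have "(M *\<^sub>v v) $ i \<le> s * v $ i" if i: "i < n" for i
    proof -
      define f where "f k = w k $ i / s ^ k" for k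
      have wc: "w k \<in> carrier_vec n" for k
        unfolding w_def e_def by (rule mult_mat_vec_carrier[OF pow_carrier_mat[OF Mc] vec_carrier])
      have "(M *\<^sub>v v) $ i = (\<Sum>k<K. (M *\<^sub>v w k) $ i / s ^ k)"
        unfolding v_def by (rule mult_mat_vec_sum_index[OF Mc wc i])
      also have "\<dots> = s * (\<Sum>k<K. f (Suc k))"
        unfolding f_def sum_distrib_left using w_Suc[OF i] s0 by (intro sum.cong) auto
      also have "\<dots> \<le> s * (\<Sum>k<K. f k)"
      proof -
        have "(\<Sum>k<K. f (Suc k)) = (\<Sum>k<K. f k) + f K - f 0"
          using sum.lessThan_Suc[of f K] sum.lessThan_Suc_shift[of f K] by simp
        moreover have "f K \<le> f 0" unfolding f_def using wK[OF i] w0[OF i] s0 by (simp add: divide_le_eq_1)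
        ultimately show ?thesis using s0 by simp
      qed
      also have "(\<Sum>k<K. f k) = v $ i" unfolding v_def f_def using i by simp
      finally show ?thesis .
    qed
    then show "M *\<^sub>v v \<le> s \<cdot>\<^sub>v v" using Mc vc unfolding less_eq_vec_def by auto
  qed
qed

section \<open>Block companion matrices\<close>

abbreviation companion_block :: "nat \<Rightarrow> 'a :: semiring_1 mat \<Rightarrow> 'a mat \<Rightarrow> 'a mat" where
  "companion_block n X Y \<equiv> four_block_mat X Y (1\<^sub>m n) (0\<^sub>m n n)"

lemma smult_append_vec: "a \<cdot>\<^sub>v (x @\<^sub>v y) = (a \<cdot>\<^sub>v x) @\<^sub>v (a \<cdot>\<^sub>v y)"
  by (intro eq_vecI) auto

lemma zero_append_vec: "0\<^sub>v n @\<^sub>v 0\<^sub>v m = 0\<^sub>v (n + m)"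
  by (intro eq_vecI) auto

lemma abs_vec_add_le: "dim_vec x = dim_vec y \<Longrightarrow> abs_vec (x + y) \<le> abs_vec x + abs_vec y"
  unfolding less_eq_vec_def by (auto simp: norm_triangle_ineq)

lemma abs_vec_smult: "abs_vec (a \<cdot>\<^sub>v x) = cmod a \<cdot>\<^sub>v abs_vec x"
  by (intro eq_vecI) (auto simp: norm_mult)

lemma companion_block_mult_vec:
  fixes X Y :: "'a :: comm_ring_1 mat"
  assumes X: "X \<in> carrier_mat n n" and Y: "Y \<in> carrier_mat n n"
    and x: "x \<in> carrier_vec n" and y: "y \<in> carrier_vec n"
  shows "companion_block n X Y *\<^sub>v (x @\<^sub>v y) = (X *\<^sub>v x + Y *\<^sub>v y) @\<^sub>v x"
proof -
  have "1\<^sub>m n *\<^sub>v x + 0\<^sub>m n n *\<^sub>v y = x" using x y by (intro eq_vecI) auto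
  then show ?thesis using four_block_mat_mult_vec[OF X Y one_carrier_mat zero_carrier_mat x y] by simp
qed

lemma map_companion_block:
  assumes "X \<in> carrier_mat n n" and "Y \<in> carrier_mat n n" and "f 0 = 0" and "f 1 = 1"
  shows "map_mat f (companion_block n X Y) = companion_block n (map_mat f X) (map_mat f Y)"
  using assms by (intro eq_matI) auto

lemma nonneg_companion_block:
  fixes X Y :: "'a :: linordered_idom mat"
  assumes "0\<^sub>m n n \<le> X" and "0\<^sub>m n n \<le> Y"
  shows "0\<^sub>m (n + n) (n + n) \<le> companion_block n X Y"
  using assms unfolding less_eq_mat_def by auto

lemma companion_block_eigenvector:
  fixes X Y :: "'a :: comm_ring_1 mat"
  assumes X: "X \<in> carrier_mat n n" and Y: "Y \<in> carrier_mat n n"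
    and x: "x \<in> carrier_vec n" and y: "y \<in> carrier_vec n"
    and ev: "companion_block n X Y *\<^sub>v (x @\<^sub>v y) = mu \<cdot>\<^sub>v (x @\<^sub>v y)"
  shows "X *\<^sub>v x + Y *\<^sub>v y = mu \<cdot>\<^sub>v x" and "x = mu \<cdot>\<^sub>v y"
proof -
  have "(X *\<^sub>v x + Y *\<^sub>v y) @\<^sub>v x = (mu \<cdot>\<^sub>v x) @\<^sub>v (mu \<cdot>\<^sub>v y)"
    using ev unfolding companion_block_mult_vec[OF X Y x y] smult_append_vec .
  then have "X *\<^sub>v x + Y *\<^sub>v y = mu \<cdot>\<^sub>v x \<and> x = mu \<cdot>\<^sub>v y"
    by (subst (asm) append_vec_eq) (use X Y x y in auto)
  then show "X *\<^sub>v x + Y *\<^sub>v y = mu \<cdot>\<^sub>v x" and "x = mu \<cdot>\<^sub>v y" by blast+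
qed

lemma companion_eigenvector_excessive:
  fixes X Y :: "real mat" and x y :: "complex vec"
  assumes X: "0\<^sub>m n n \<le> X" and Y: "0\<^sub>m n n \<le> Y"
    and x: "x \<in> carrier_vec n" and y: "y \<in> carrier_vec n"
    and top: "map_mat complex_of_real X *\<^sub>v x + map_mat complex_of_real Y *\<^sub>v y = mu \<cdot>\<^sub>v x"
    and bot: "x = mu \<cdot>\<^sub>v y" and mu: "1 \<le> cmod mu"
  shows "abs_vec x \<le> (X + Y) *\<^sub>v abs_vec x"
proof -
  let ?c = "map_mat complex_of_real"
  have Xc: "X \<in> carrier_mat n n" and Yc: "Y \<in> carrier_mat n n"
    using X Y unfolding less_eq_mat_def by auto
  define u where "u = abs_vec x"
  have u: "u \<in> carrier_vec n" "0\<^sub>v n \<le> u" unfolding u_def using x by (auto simp: less_eq_vec_def)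
  have stretch: "z \<le> cmod mu \<cdot>\<^sub>v z" if "0\<^sub>v n \<le> z" for z
    using that mu unfolding less_eq_vec_def by (auto simp: mult_le_cancel_right1)
  have "abs_vec y \<le> cmod mu \<cdot>\<^sub>v abs_vec y" by (rule stretch) (use y in \<open>auto simp: less_eq_vec_def\<close>)
  also have "\<dots> = u" unfolding u_def bot abs_vec_smult ..
  finally have y_le: "abs_vec y \<le> u" .
  have "u \<le> cmod mu \<cdot>\<^sub>v u" using stretch[OF u(2)] .
  also have "\<dots> = abs_vec (?c X *\<^sub>v x + ?c Y *\<^sub>v y)" unfolding top u_def abs_vec_smult ..
  also have "\<dots> \<le> abs_vec (?c X *\<^sub>v x) + abs_vec (?c Y *\<^sub>v y)" using Xc Yc by (intro abs_vec_add_le) simp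
  also have "\<dots> \<le> X *\<^sub>v u + Y *\<^sub>v u"
  proof (rule add_mono_vec)
    show "abs_vec (?c X *\<^sub>v x) \<le> X *\<^sub>v u" unfolding u_def by (rule abs_vec_mult_mat_vec_le[OF X x])
    have "abs_vec (?c Y *\<^sub>v y) \<le> Y *\<^sub>v abs_vec y" by (rule abs_vec_mult_mat_vec_le[OF Y y])
    also have "\<dots> \<le> Y *\<^sub>v u" using mult_mat_vec_mono[OF Y y_le] u by simp
    finally show "abs_vec (?c Y *\<^sub>v y) \<le> Y *\<^sub>v u" .
  qed (use Xc Yc in simp)
  also have "\<dots> = (X + Y) *\<^sub>v u" using add_mult_distrib_mat_vec[OF Xc Yc u(1)] ..
  finally show ?thesis unfolding u_def .
qed

lemma rho_companion_block_less_1: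
  fixes X Y :: "real mat"
  assumes X: "0\<^sub>m n n \<le> X" and Y: "0\<^sub>m n n \<le> Y" and n: "0 < n"
    and no_excessive: "\<And>u. 0\<^sub>v n \<le> u \<Longrightarrow> u \<le> (X + Y) *\<^sub>v u \<Longrightarrow> u = 0\<^sub>v n"
  shows "rho (companion_block n X Y) < 1"
proof (rule ccontr)
  assume not_less: "\<not> ?thesis"
  let ?c = "map_mat complex_of_real"
  have Xc: "X \<in> carrier_mat n n" and Yc: "Y \<in> carrier_mat n n"
    using X Y unfolding less_eq_mat_def by auto
  have T: "companion_block n X Y \<in> carrier_mat (n + n) (n + n)" using Xc Yc by auto
  obtain mu w where ev: "eigenvector (?c (companion_block n X Y)) w mu"
    and r: "rho (companion_block n X Y) = cmod mu"
    using rho_eigenvector[OF T] n by (metis add_gr_0)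
  have mu: "1 \<le> cmod mu" using not_less r by simp
  have w: "w \<in> carrier_vec (n + n)" and w0: "w \<noteq> 0\<^sub>v (n + n)"
    and Tw: "?c (companion_block n X Y) *\<^sub>v w = mu \<cdot>\<^sub>v w"
    using ev T unfolding eigenvector_def by auto
  define x y where "x = vec_first w n" and "y = vec_last w n"
  have x: "x \<in> carrier_vec n" and y: "y \<in> carrier_vec n" unfolding x_def y_def by auto
  have wxy: "w = x @\<^sub>v y" unfolding x_def y_def using w by simp
  have "companion_block n (?c X) (?c Y) *\<^sub>v (x @\<^sub>v y) = mu \<cdot>\<^sub>v (x @\<^sub>v y)"
    using Tw unfolding wxy map_companion_block[OF Xc Yc of_real_0 of_real_1] .
  note eqs = companion_block_eigenvector[OF map_carrier_mat[THEN iffD2, OF Xc]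
      map_carrier_mat[THEN iffD2, OF Yc] x y this]
  have "abs_vec x = 0\<^sub>v n"
  proof (rule no_excessive)
    show "0\<^sub>v n \<le> abs_vec x" using x by (auto simp: less_eq_vec_def)
    show "abs_vec x \<le> (X + Y) *\<^sub>v abs_vec x" by (rule companion_eigenvector_excessive[OF X Y x y eqs mu])
  qed
  then have x0: "x = 0\<^sub>v n" using x by (auto simp: vec_eq_iff)
  have "y = 0\<^sub>v n"
  proof (rule eq_vecI)
    fix i assume "i < dim_vec (0\<^sub>v n :: complex vec)"
    then have i: "i < n" by simp
    have "mu * y $ i = x $ i" using arg_cong[OF eqs(2), of "\<lambda>z. z $ i"] i y Xc Yc by simp
    then show "y $ i = 0\<^sub>v n $ i" using x0 mu i by auto
  qed (use y in simp)
  then have "w = 0\<^sub>v (n + n)" unfolding wxy x0 by (intro eq_vecI) auto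
  with w0 show False ..
qed

lemma companion_block_product_mult_vec:
  fixes X1 Y1 X2 Y2 :: "'a :: comm_ring_1 mat"
  assumes X1: "X1 \<in> carrier_mat n n" and Y1: "Y1 \<in> carrier_mat n n"
    and X2: "X2 \<in> carrier_mat n n" and Y2: "Y2 \<in> carrier_mat n n"
    and x: "x \<in> carrier_vec n" and y: "y \<in> carrier_vec n"
  shows "companion_block n (X2 * X1 + Y2) (X2 * Y1) *\<^sub>v (x @\<^sub>v y)
    = (X2 *\<^sub>v (X1 *\<^sub>v x + Y1 *\<^sub>v y) + Y2 *\<^sub>v x) @\<^sub>v x"
proof -
  have "(X2 * X1 + Y2) *\<^sub>v x = X2 *\<^sub>v (X1 *\<^sub>v x) + Y2 *\<^sub>v x"
    using add_mult_distrib_mat_vec[OF mult_carrier_mat[OF X2 X1] Y2 x] assoc_mult_mat_vec[OF X2 X1 x]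
    by simp
  moreover have "(X2 * Y1) *\<^sub>v y = X2 *\<^sub>v (Y1 *\<^sub>v y)" using assoc_mult_mat_vec[OF X2 Y1 y] by simp
  moreover have "X2 *\<^sub>v (X1 *\<^sub>v x + Y1 *\<^sub>v y) = X2 *\<^sub>v (X1 *\<^sub>v x) + X2 *\<^sub>v (Y1 *\<^sub>v y)"
    using mult_add_distrib_mat_vec[OF X2] X1 Y1 x y by simp
  ultimately have "(X2 * X1 + Y2) *\<^sub>v x + (X2 * Y1) *\<^sub>v y = X2 *\<^sub>v (X1 *\<^sub>v x + Y1 *\<^sub>v y) + Y2 *\<^sub>v x"
    using X1 X2 Y1 Y2 x y by (intro eq_vecI) auto
  then show ?thesis using companion_block_mult_vec[of "X2 * X1 + Y2" n "X2 * Y1" x y] X1 X2 Y1 Y2 x y by simp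
qed

lemma companion_block_subinvariant_mono:
  fixes X1 Y1 X2 Y2 :: "real mat"
  assumes X2: "0\<^sub>m n n \<le> X2" "X2 \<le> X1" and Y2: "0\<^sub>m n n \<le> Y2" "Y2 \<le> Y1"
    and v: "v \<in> carrier_vec (n + n)" "0\<^sub>v (n + n) \<le> v"
    and Tv: "companion_block n X1 Y1 *\<^sub>v v \<le> s \<cdot>\<^sub>v v" and s: "0 \<le> s" "s \<le> 1"
  shows "companion_block n (X2 * X1 + Y2) (X2 * Y1) *\<^sub>v v \<le> s \<cdot>\<^sub>v v"
proof -
  have X2c: "X2 \<in> carrier_mat n n" and X1c: "X1 \<in> carrier_mat n n"
    and Y2c: "Y2 \<in> carrier_mat n n" and Y1c: "Y1 \<in> carrier_mat n n"
    using X2 Y2 unfolding less_eq_mat_def by auto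
  have Y1: "0\<^sub>m n n \<le> Y1" using Y2 by (rule order_trans)
  define x y where "x = vec_first v n" and "y = vec_last v n"
  have x: "x \<in> carrier_vec n" and y: "y \<in> carrier_vec n" unfolding x_def y_def by auto
  have vxy: "v = x @\<^sub>v y" unfolding x_def y_def using v by simp
  have "0\<^sub>v n @\<^sub>v 0\<^sub>v n \<le> x @\<^sub>v y" using v(2) unfolding vxy zero_append_vec .
  then have x0: "0\<^sub>v n \<le> x" using append_vec_le[of "0\<^sub>v n" n x] x by auto
  define t where "t = X1 *\<^sub>v x + Y1 *\<^sub>v y"
  have t: "t \<in> carrier_vec n" unfolding t_def using X1c Y1c x y by auto
  have "t @\<^sub>v x \<le> (s \<cdot>\<^sub>v x) @\<^sub>v (s \<cdot>\<^sub>v y)"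
    using Tv unfolding vxy companion_block_mult_vec[OF X1c Y1c x y] smult_append_vec t_def .
  then have t_le: "t \<le> s \<cdot>\<^sub>v x" and x_le: "x \<le> s \<cdot>\<^sub>v y" using append_vec_le[of t n "s \<cdot>\<^sub>v x"] t x by auto
  have "X2 *\<^sub>v t + Y2 *\<^sub>v x \<le> s \<cdot>\<^sub>v (X1 *\<^sub>v x) + s \<cdot>\<^sub>v (Y1 *\<^sub>v y)"
  proof (rule add_mono_vec)
    have "X2 *\<^sub>v t \<le> X2 *\<^sub>v (s \<cdot>\<^sub>v x)" using mult_mat_vec_mono[OF X2(1) t_le] x by simp
    also have "\<dots> = s \<cdot>\<^sub>v (X2 *\<^sub>v x)" using X2c x by (simp add: mult_mat_vec)
    also have "\<dots> \<le> s \<cdot>\<^sub>v (X1 *\<^sub>v x)" using mult_mat_vec_mono_mat[OF X2(2) x0 X2c] s(1) by (rule smult_mono_vec)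
    finally show "X2 *\<^sub>v t \<le> s \<cdot>\<^sub>v (X1 *\<^sub>v x)" .
    have "Y2 *\<^sub>v x \<le> Y1 *\<^sub>v x" using mult_mat_vec_mono_mat[OF Y2(2) x0 Y2c] .
    also have "\<dots> \<le> Y1 *\<^sub>v (s \<cdot>\<^sub>v y)" using mult_mat_vec_mono[OF Y1 x_le] y by simp
    also have "\<dots> = s \<cdot>\<^sub>v (Y1 *\<^sub>v y)" using Y1c y by (simp add: mult_mat_vec)
    finally show "Y2 *\<^sub>v x \<le> s \<cdot>\<^sub>v (Y1 *\<^sub>v y)" .
  qed (use X2c Y2c x t in simp)
  also have "\<dots> = s \<cdot>\<^sub>v t"
    unfolding t_def using smult_add_distrib_vec[of "X1 *\<^sub>v x" n "Y1 *\<^sub>v y" s] X1c Y1c x y by simp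
  also have "\<dots> \<le> s \<cdot>\<^sub>v (s \<cdot>\<^sub>v x)" using t_le s(1) by (rule smult_mono_vec)
  also have "\<dots> \<le> s \<cdot>\<^sub>v x" using x0 s unfolding less_eq_vec_def by (auto simp: mult_left_le_one_le)
  finally have top_le: "X2 *\<^sub>v t + Y2 *\<^sub>v x \<le> s \<cdot>\<^sub>v x" .
  have "companion_block n (X2 * X1 + Y2) (X2 * Y1) *\<^sub>v v = (X2 *\<^sub>v t + Y2 *\<^sub>v x) @\<^sub>v x"
    unfolding vxy t_def by (rule companion_block_product_mult_vec[OF X1c Y1c X2c Y2c x y])
  also have "\<dots> \<le> (s \<cdot>\<^sub>v x) @\<^sub>v (s \<cdot>\<^sub>v y)"
    using top_le x_le X2c Y2c x t by (subst append_vec_le[of _ n]) auto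
  also have "\<dots> = s \<cdot>\<^sub>v v" unfolding vxy smult_append_vec ..
  finally show ?thesis .
qed

lemma rho_companion_block_mono:
  fixes X1 Y1 X2 Y2 :: "real mat"
  assumes n: "0 < n" and X2: "0\<^sub>m n n \<le> X2" "X2 \<le> X1" and Y2: "0\<^sub>m n n \<le> Y2" "Y2 \<le> Y1"
    and T: "rho (companion_block n X1 Y1) < 1"
  shows "rho (companion_block n (X2 * X1 + Y2) (X2 * Y1)) \<le> rho (companion_block n X1 Y1)"
proof -
  have X1: "0\<^sub>m n n \<le> X1" and Y1: "0\<^sub>m n n \<le> Y1" using X2 Y2 by (auto intro: order_trans)
  have X2c: "X2 \<in> carrier_mat n n" and X1c: "X1 \<in> carrier_mat n n"
    and Y2c: "Y2 \<in> carrier_mat n n" and Y1c: "Y1 \<in> carrier_mat n n"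
    using X2 Y2 unfolding less_eq_mat_def by auto
  have nn: "0 < n + n" using n by simp
  have W: "0\<^sub>m (n + n) (n + n) \<le> companion_block n (X2 * X1 + Y2) (X2 * Y1)"
  proof (rule nonneg_companion_block)
    show "0\<^sub>m n n \<le> X2 * Y1" using nonneg_mult_mat[OF X2(1) Y1] .
    show "0\<^sub>m n n \<le> X2 * X1 + Y2" by (rule nonneg_add_mat[OF nonneg_mult_mat[OF X2(1) X1] Y2(1)])
  qed
  show ?thesis
  proof (rule dense_ge_bounded[OF T])
    fix s assume s: "rho (companion_block n X1 Y1) < s" "s < 1"
    obtain v where v: "v \<in> carrier_vec (n + n)" and v_pos: "\<And>i. i < n + n \<Longrightarrow> 0 < v $ i"
      and Tv: "companion_block n X1 Y1 *\<^sub>v v \<le> s \<cdot>\<^sub>v v"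
      using exists_pos_subinvariant_vec[OF nonneg_companion_block[OF X1 Y1] nn s(1)] by blast
    have "0 \<le> s" using s(1) rho_nonneg[of _ "n + n"] X1c Y1c nn by (meson four_block_carrier_mat
      one_carrier_mat zero_carrier_mat order.trans less_imp_le)
    moreover have "0\<^sub>v (n + n) \<le> v" using v v_pos unfolding less_eq_vec_def by (auto intro: less_imp_le)
    ultimately have "companion_block n (X2 * X1 + Y2) (X2 * Y1) *\<^sub>v v \<le> s \<cdot>\<^sub>v v"
      using companion_block_subinvariant_mono[OF X2 Y2 v _ Tv] s(2) by simp
    then show "rho (companion_block n (X2 * X1 + Y2) (X2 * Y1)) \<le> s"
      using rho_le_if_subinvariant[OF W nn v v_pos] by blast
  qed
qed

section \<open>Double splittings\<close>

lemma excessive_vec_le_pow: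
  fixes X :: "'a :: linordered_idom mat"
  assumes X: "0\<^sub>m n n \<le> X" and u: "u \<in> carrier_vec n" and uX: "u \<le> X *\<^sub>v u"
  shows "u \<le> X ^\<^sub>m k *\<^sub>v u"
proof -
  have Xc: "X \<in> carrier_mat n n" using X unfolding less_eq_mat_def by auto
  show ?thesis
  proof (induction k)
    case 0
    show ?case using u Xc by simp
  next
    case (Suc k)
    have "u \<le> X ^\<^sub>m k *\<^sub>v u" by (rule Suc.IH)
    also have "\<dots> \<le> X ^\<^sub>m k *\<^sub>v (X *\<^sub>v u)" using mult_mat_vec_mono[OF nonneg_pow_mat[OF X] uX] Xc u by simp
    also have "\<dots> = X ^\<^sub>m Suc k *\<^sub>v u" using assoc_mult_mat_vec[OF pow_carrier_mat[OF Xc] Xc u] by simp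
    finally show ?case .
  qed
qed

lemma neumann_partial_sum_bounds:
  fixes G Ad X :: "real mat"
  assumes G: "0\<^sub>m n m \<le> G" and Ad: "0\<^sub>m n m \<le> Ad" and X: "0\<^sub>m n n \<le> X" and Ad_eq: "Ad = G + X * Ad"
  shows "Ad - X ^\<^sub>m Suc k * Ad = (Ad - X ^\<^sub>m k * Ad) + X ^\<^sub>m k * G"
    and "0\<^sub>m n m \<le> Ad - X ^\<^sub>m k * Ad" and "Ad - X ^\<^sub>m k * Ad \<le> Ad"
proof -
  have Gc: "G \<in> carrier_mat n m" and Adc: "Ad \<in> carrier_mat n m" and Xc: "X \<in> carrier_mat n n"
    using G Ad X unfolding less_eq_mat_def by auto
  have Xk: "X ^\<^sub>m k \<in> carrier_mat n n" for k using Xc by simp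
  have XAd: "X * Ad = Ad - G"
  proof (rule eq_matI)
    fix i j assume ij: "i < dim_row (Ad - G)" "j < dim_col (Ad - G)"
    have "Ad $$ (i, j) = G $$ (i, j) + (X * Ad) $$ (i, j)"
      using arg_cong[OF Ad_eq, of "\<lambda>M. M $$ (i, j)"] ij Gc Adc Xc by simp
    then show "(X * Ad) $$ (i, j) = (Ad - G) $$ (i, j)" using ij Gc Adc by simp
  qed (use Gc Adc Xc in auto)
  have step: "Ad - X ^\<^sub>m Suc k * Ad = (Ad - X ^\<^sub>m k * Ad) + X ^\<^sub>m k * G" for k
  proof -
    have "X ^\<^sub>m Suc k * Ad = X ^\<^sub>m k * Ad - X ^\<^sub>m k * G"
      using assoc_mult_mat[OF Xk Xc Adc] mult_minus_distrib_mat[OF Xk Adc Gc] XAd by simp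
    then show ?thesis using Xk[of k] Gc Adc by (intro eq_matI) auto
  qed
  then show "Ad - X ^\<^sub>m Suc k * Ad = (Ad - X ^\<^sub>m k * Ad) + X ^\<^sub>m k * G" .
  show "0\<^sub>m n m \<le> Ad - X ^\<^sub>m k * Ad"
  proof (induction k)
    case 0
    show ?case using Adc Xc by (auto simp: less_eq_mat_def)
  next
    case (Suc k)
    then show ?case unfolding step
      using nonneg_mult_mat[OF nonneg_pow_mat[OF X] G, of k] Adc Xk[of k] unfolding less_eq_mat_def by auto
  qed
  show "Ad - X ^\<^sub>m k * Ad \<le> Ad"
    using nonneg_mult_mat[OF nonneg_pow_mat[OF X] Ad, of k] Adc unfolding less_eq_mat_def by auto
qed

lemma excessive_vec_neumann_growth:
  fixes G Ad Q X :: "real mat"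
  assumes G: "0\<^sub>m n m \<le> G" and Ad: "0\<^sub>m n m \<le> Ad" and Q: "Q \<in> carrier_mat m n"
    and X_eq: "X = G * Q" and X: "0\<^sub>m n n \<le> X" and Ad_eq: "Ad = G + X * Ad"
    and u: "u \<in> carrier_vec n" and uX: "u \<le> X *\<^sub>v u"
  shows "of_nat k \<cdot>\<^sub>v u \<le> (Ad - X ^\<^sub>m k * Ad) *\<^sub>v (Q *\<^sub>v u)"
proof -
  have Gc: "G \<in> carrier_mat n m" and Adc: "Ad \<in> carrier_mat n m" and Xc: "X \<in> carrier_mat n n"
    using G Ad X unfolding less_eq_mat_def by auto
  have zc: "Q *\<^sub>v u \<in> carrier_vec m" using Q u by simp
  show ?thesis
  proof (induction k)
    case 0
    have "Ad - X ^\<^sub>m 0 * Ad = 0\<^sub>m n m" using Adc Xc by (intro eq_matI) auto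
    then show ?case using u zc by (auto simp: less_eq_vec_def)
  next
    case (Suc k)
    have Xk: "X ^\<^sub>m k \<in> carrier_mat n n" using Xc by simp
    have "of_nat (Suc k) \<cdot>\<^sub>v u = of_nat k \<cdot>\<^sub>v u + u" using u by (intro eq_vecI) (auto simp: algebra_simps)
    also have "\<dots> \<le> (Ad - X ^\<^sub>m k * Ad) *\<^sub>v (Q *\<^sub>v u) + X ^\<^sub>m Suc k *\<^sub>v u"
      by (rule add_mono_vec[OF Suc.IH excessive_vec_le_pow[OF X u uX]]) simp
    also have "X ^\<^sub>m Suc k *\<^sub>v u = (X ^\<^sub>m k * G) *\<^sub>v (Q *\<^sub>v u)"
      using assoc_mult_mat_vec[OF Xk Gc zc] assoc_mult_mat_vec[OF Xk Xc u] assoc_mult_mat_vec[OF Gc Q u] X_eq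
      by simp
    also have "(Ad - X ^\<^sub>m k * Ad) *\<^sub>v (Q *\<^sub>v u) + \<dots> = (Ad - X ^\<^sub>m Suc k * Ad) *\<^sub>v (Q *\<^sub>v u)"
    proof -
      have Dc: "Ad - X ^\<^sub>m k * Ad \<in> carrier_mat n m" by (rule minus_carrier_mat[OF mult_carrier_mat[OF Xk Adc]])
      show ?thesis unfolding neumann_partial_sum_bounds(1)[OF G Ad X Ad_eq]
        using add_mult_distrib_mat_vec[OF Dc mult_carrier_mat[OF Xk Gc] zc] by simp
    qed
    finally show ?case .
  qed
qed

text \<open>The partial sums \<open>D\<^sub>k = Ad - X\<^sup>k Ad = \<Sum>j<k. X\<^sup>j G\<close> are bounded by \<open>Ad\<close>, while for \<open>u \<le> X u\<close>
  and \<open>z = Q u\<close> the vectors \<open>D\<^sub>k z = \<Sum>j<k. X\<^bsup>j+1\<^esup> u\<close> grow at least like \<open>k u\<close>.\<close>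

lemma nonneg_excessive_vec_eq_0:
  fixes G Ad Q X :: "real mat"
  assumes G: "0\<^sub>m n m \<le> G" and Ad: "0\<^sub>m n m \<le> Ad" and Q: "Q \<in> carrier_mat m n"
    and X_eq: "X = G * Q" and X: "0\<^sub>m n n \<le> X" and Ad_eq: "Ad = G + X * Ad"
    and u: "0\<^sub>v n \<le> u" and uX: "u \<le> X *\<^sub>v u"
  shows "u = 0\<^sub>v n"
proof -
  have Adc: "Ad \<in> carrier_mat n m" and Xc: "X \<in> carrier_mat n n" and uc: "u \<in> carrier_vec n"
    using Ad X u unfolding less_eq_mat_def less_eq_vec_def by auto
  note D = neumann_partial_sum_bounds[OF G Ad X Ad_eq]
  define z where "z = Q *\<^sub>v u"
  have zc: "z \<in> carrier_vec m" unfolding z_def using Q uc by simp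
  note grow = excessive_vec_neumann_growth[OF G Ad Q X_eq X Ad_eq uc uX, folded z_def]
  define c where "c = Ad *\<^sub>v map_vec abs z"
  have bound: "(Ad - X ^\<^sub>m k * Ad) *\<^sub>v z \<le> c" for k
  proof -
    have Dc: "Ad - X ^\<^sub>m k * Ad \<in> carrier_mat n m"
      by (rule minus_carrier_mat[OF mult_carrier_mat[OF pow_carrier_mat[OF Xc] Adc]])
    have "(Ad - X ^\<^sub>m k * Ad) *\<^sub>v z \<le> (Ad - X ^\<^sub>m k * Ad) *\<^sub>v map_vec abs z"
      using zc by (intro mult_mat_vec_mono[OF D(2)]) (auto simp: less_eq_vec_def)
    also have "\<dots> \<le> c" unfolding c_def
      using zc by (intro mult_mat_vec_mono_mat[OF D(3) _ Dc]) (auto simp: less_eq_vec_def)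
    finally show ?thesis .
  qed
  show ?thesis
  proof (rule eq_vecI)
    fix i assume "i < dim_vec (0\<^sub>v n :: real vec)"
    then have i: "i < n" by simp
    have le: "real k * u $ i \<le> c $ i" for k
      using order_trans[OF grow bound, of k] i uc unfolding less_eq_vec_def by auto
    have "\<not> 0 < u $ i"
    proof
      assume "0 < u $ i"
      then obtain k where "c $ i < real k * u $ i" using reals_Archimedean3 by blast
      with le[of k] show False by simp
    qed
    then show "u $ i = 0\<^sub>v n $ i" using u i unfolding less_eq_vec_def by auto
  qed (use uc in simp)
qed

lemma double_proper_regular_imp_weak_regular:
  assumes "double_proper_regular_splitting m n A P R S"
  shows "double_proper_weak_regular_splitting m n A P R S"
proof -
  have P: "P \<in> carrier_mat m n" and S: "S \<in> carrier_mat m n"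
    and G: "0\<^sub>m n m \<le> pinv P" and R: "0\<^sub>m m n \<le> R" and "S \<le> 0\<^sub>m m n"
    using assms unfolding double_proper_regular_splitting_def double_proper_splitting_def
      double_splitting_def by auto
  then have "0\<^sub>m n n \<le> pinv P * - S" by (intro nonneg_mult_mat[OF G] nonneg_uminus_mat)
  then have "pinv P * S \<le> 0\<^sub>m n n" using pinv_carrier_mat[OF P] S unfolding less_eq_mat_def by auto
  then show ?thesis using assms nonneg_mult_mat[OF G R]
    unfolding double_proper_weak_regular_splitting_def double_proper_regular_splitting_def by auto
qed

lemma rho_companion_block_weak_regular_less_1:
  assumes n: "0 < n" and A: "A \<in> carrier_mat m n" and semi: "semi_monotone A"
    and split: "double_proper_weak_regular_splitting m n A P R S"
  shows "rho (companion_block n (pinv P * R) (- (pinv P * S))) < 1"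
proof (rule rho_companion_block_less_1[OF _ _ n])
  have P: "P \<in> carrier_mat m n" and R: "R \<in> carrier_mat m n" and S: "S \<in> carrier_mat m n"
    and A_eq: "A = P - R + S" and rng: "mat_range P = mat_range A" and nul: "mat_null P = mat_null A"
    and G: "0\<^sub>m n m \<le> pinv P" and GR: "0\<^sub>m n n \<le> pinv P * R" and GS: "pinv P * S \<le> 0\<^sub>m n n"
    using split unfolding double_proper_weak_regular_splitting_def double_proper_splitting_def
      double_splitting_def by auto
  have Gc: "pinv P \<in> carrier_mat n m" using pinv_carrier_mat[OF P] .
  show "0\<^sub>m n n \<le> pinv P * R" by (rule GR)
  show GS': "0\<^sub>m n n \<le> - (pinv P * S)" using GS by (rule nonneg_uminus_mat)
  have "P - A = R - S" using A_eq P R S by (intro eq_matI) auto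
  then have X_eq: "pinv P * R + - (pinv P * S) = pinv P * (P - A)"
    using mult_minus_distrib_mat[OF Gc R S] Gc R S by (intro eq_matI) auto
  have Ad: "0\<^sub>m n m \<le> pinv A" using semi A unfolding semi_monotone_def by simp
  have Ad_eq: "pinv A = pinv P + pinv P * (P - A) * pinv A"
    by (rule proper_splitting_pinv[OF A P rng nul])
  have X: "0\<^sub>m n n \<le> pinv P * (P - A)"
    unfolding X_eq[symmetric] using GR GS' by (rule nonneg_add_mat)
  have PA: "P - A \<in> carrier_mat m n" by (rule minus_carrier_mat[OF A])
  fix u assume "0\<^sub>v n \<le> u" and "u \<le> (pinv P * R + - (pinv P * S)) *\<^sub>v u"
  then show "u = 0\<^sub>v n" unfolding X_eq by (rule nonneg_excessive_vec_eq_0[OF G Ad PA refl X Ad_eq])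
qed

theorem theorem3p16:
  fixes m n :: nat and A P1 R1 S1 P2 R2 S2 :: "real mat"
  assumes n_pos: "n > 0"
    and A: "A \<in> carrier_mat m n"
    and semi: "semi_monotone A"
    and split1: "double_proper_weak_regular_splitting m n A P1 R1 S1"
    and split2: "double_proper_regular_splitting m n A P2 R2 S2"
    and null: "mat_null P2 \<subseteq> mat_null R2"
    and range: "mat_range R2 \<subseteq> mat_range P2"
    and spec: "- 1 \<notin> rspectrum (R2 * pinv P1)"
    and hatA: "pinv ((1\<^sub>m m + R2 * pinv P1) * A) \<ge> 0\<^sub>m n m"
    and c1: "pinv P1 * R1 \<ge> pinv P2 * R2"
    and c2: "pinv P2 * S2 \<ge> pinv P1 * S1"
    and c3: "pinv P2 * R2 + pinv P2 * S2 \<le> 0\<^sub>m n n"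
  shows "rho (four_block_mat (pinv P2 * R2 * pinv P1 * R1 - pinv P2 * S2)
                             (- (pinv P2 * R2 * pinv P1 * S1))
                             (1\<^sub>m n) (0\<^sub>m n n))
           \<le> rho (four_block_mat (pinv P1 * R1) (- (pinv P1 * S1)) (1\<^sub>m n) (0\<^sub>m n n))
       \<and> rho (four_block_mat (pinv P1 * R1) (- (pinv P1 * S1)) (1\<^sub>m n) (0\<^sub>m n n)) < 1"
proof -
  have T1: "rho (companion_block n (pinv P1 * R1) (- (pinv P1 * S1))) < 1"
    by (rule rho_companion_block_weak_regular_less_1[OF n_pos A semi split1])
  have X2: "0\<^sub>m n n \<le> pinv P2 * R2" and Y2: "0\<^sub>m n n \<le> - (pinv P2 * S2)"
    using double_proper_regular_imp_weak_regular[OF split2]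
    unfolding double_proper_weak_regular_splitting_def by (auto intro: nonneg_uminus_mat)
  have G1: "pinv P1 \<in> carrier_mat n m" and G2: "pinv P2 \<in> carrier_mat n m"
    and R1: "R1 \<in> carrier_mat m n" and S1: "S1 \<in> carrier_mat m n"
    and R2: "R2 \<in> carrier_mat m n" and S2: "S2 \<in> carrier_mat m n"
    using split1 split2 pinv_carrier_mat
    unfolding double_proper_weak_regular_splitting_def double_proper_regular_splitting_def
      double_proper_splitting_def double_splitting_def by auto
  have "pinv P2 * R2 * pinv P1 * R1 - pinv P2 * S2 = pinv P2 * R2 * (pinv P1 * R1) + - (pinv P2 * S2)"
    unfolding assoc_mult_mat[OF mult_carrier_mat[OF G2 R2] G1 R1]
    by (rule minus_add_uminus_mat[OF mult_carrier_mat[OF mult_carrier_mat[OF G2 R2] mult_carrier_mat[OF G1 R1]]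
          mult_carrier_mat[OF G2 S2]])
  moreover have "- (pinv P2 * R2 * pinv P1 * S1) = pinv P2 * R2 * - (pinv P1 * S1)"
    unfolding assoc_mult_mat[OF mult_carrier_mat[OF G2 R2] G1 S1]
    using uminus_mult_right_mat[of "pinv P2 * R2" "pinv P1 * S1"] G1 G2 R2 S1 by simp
  ultimately show ?thesis
    using rho_companion_block_mono[OF n_pos X2 c1 Y2 uminus_mat_mono[OF c2] T1] T1 by simp
qed

end
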